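(* Let $n\ge1$, let $\tau\in S_n$ have schedule $(w_1,\dots,w_n)$, and let $k$ be the length of the last run of $\tau$. Then $$\sum_{\substack{Pr\in\mathcal{P}ref_n\\ \operatorname{diagword}(Pr)=\tau}} t^{\operatorname{area}(Pr)}q^{\operatorname{dinv}(Pr)} = t^{\operatorname{maj}(\tau)}\frac{[n]_q}{[k]_q}\prod_{i=1}^n[w_i]_q = \frac{[n]_q}{[k]_q}\sum_{\substack{PF\in\mathcal{PF}_n\\ \operatorname{diagword}(PF)=\tau}} t^{\operatorname{area}(PF)}q^{\operatorname{dinv}(PF)}.$$
   Context: Runs of a permutation are its maximal increasing contiguous segments. Schedule of $\tau\in S_n$: if the last run has length $k$, $w_i=i$ for $1\le i\le k$; for $k<i\le n$, $w_i$ is the number of elements of the run containing $\tau_{n+1-i}$ larger than $\tau_{n+1-i}$ plus the number of elements smaller than $\tau_{n+1-i}$ in the next run. A preference function on $n$ cars is a map $f:[n]\to[n]$; $\mathcal{P}ref_n$ is the set of them. It is drawn as a labeled lattice path in the $n\times n$ grid: for $j=1,\dots,n$ in turn, the cars in $f^{-1}(j)$ are written in column $j$ in increasing order bottom to top in the lowest unused rows. A car in the cell with lower-left corner $(x,y)$ lies in diagonal $y-x$. The deviation $l(Pr)$ is the maximum over cars of minus their diagonal (always $\ge0$). A parking function is a preference function with $l(Pr)=0$ (equivalently $|f^{-1}([j])|\ge j$ for all $j$); $\mathcal{PF}_n$ is the set of them. $\operatorname{area}(Pr)=\sum_c(d(c)+l(Pr))$, $d(c)$ the diagonal of car $c$.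 $\operatorname{dinv}(Pr)$ = (number of pairs of cars in the same diagonal with the left one smaller) + (number of pairs $b<a$ with $a$ in diagonal $m+1$, $b$ in diagonal $m$, and $b$ in a column strictly right of $a$) + (number of cars in negative diagonals). $\operatorname{diagword}(Pr)$ lists the cars of each nonempty diagonal in increasing order, diagonals from highest to lowest. $\operatorname{maj}(\tau)$ is the sum of descent positions; $[m]_q=1+q+\dots+q^{m-1}$. *)

theory Defs
  imports "HOL-Library.FuncSet"
begin

definition Pref :: "nat \<Rightarrow> (nat \<Rightarrow> nat) set" where
  "Pref n = {1..n} \<rightarrow>\<^sub>E {1..n}"

text \<open>Row (0-based y-coordinate of the lower-left corner) of car c: the cars of
  column f c are placed, increasing bottom to top, in the lowest unused rows.\<close>
definition row :: "nat \<Rightarrow> (nat \<Rightarrow> nat) \<Rightarrow> nat \<Rightarrow> nat" where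
  "row n f c = card {c'\<in>{1..n}. f c' < f c} + card {c'\<in>{1..n}. f c' = f c \<and> c' < c}"

text \<open>Diagonal y - x of the cell with lower-left corner (x,y) = (f c - 1, row).\<close>
definition diag :: "nat \<Rightarrow> (nat \<Rightarrow> nat) \<Rightarrow> nat \<Rightarrow> int" where
  "diag n f c = int (row n f c) - (int (f c) - 1)"

definition deviation :: "nat \<Rightarrow> (nat \<Rightarrow> nat) \<Rightarrow> int" where
  "deviation n f = Max ((\<lambda>c. - diag n f c) ` {1..n})"

definition PF :: "nat \<Rightarrow> (nat \<Rightarrow> nat) set" where
  "PF n = {f \<in> Pref n. deviation n f = 0}"

definition area :: "nat \<Rightarrow> (nat \<Rightarrow> nat) \<Rightarrow> nat" where
  "area n f = nat (\<Sum>c\<in>{1..n}. diag n f c + deviation n f)"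

definition dinv :: "nat \<Rightarrow> (nat \<Rightarrow> nat) \<Rightarrow> nat" where
  "dinv n f =
     card {(a, b). a \<in> {1..n} \<and> b \<in> {1..n} \<and> diag n f a = diag n f b \<and> f a < f b \<and> a < b}
   + card {(a, b). a \<in> {1..n} \<and> b \<in> {1..n} \<and> b < a \<and> diag n f a = diag n f b + 1 \<and> f a < f b}
   + card {c \<in> {1..n}. diag n f c < 0}"

definition diagword :: "nat \<Rightarrow> (nat \<Rightarrow> nat) \<Rightarrow> nat list" where
  "diagword n f = concat (map (\<lambda>d. sorted_list_of_set {c \<in> {1..n}. diag n f c = d})
                             (rev [- int n..int n]))"

section \<open>Permutation statistics (one-line notation as a list, 0-based indices)\<close>

definition run_index :: "nat list \<Rightarrow> nat \<Rightarrow> nat" where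
  "run_index \<tau> p = card {i. i + 1 \<le> p \<and> \<tau> ! i > \<tau> ! (i + 1)}"

definition last_run_len :: "nat list \<Rightarrow> nat" where
  "last_run_len \<tau> = card {p. p < length \<tau> \<and> run_index \<tau> p = run_index \<tau> (length \<tau> - 1)}"

text \<open>schedule \<tau> i = w_i for 1 <= i <= n; \<tau>_{n+1-i} is \<tau> ! (n - i).\<close>
definition schedule :: "nat list \<Rightarrow> nat \<Rightarrow> nat" where
  "schedule \<tau> i =
     (if i \<le> last_run_len \<tau> then i
      else (let n = length \<tau>; p = n - i in
              card {p'. p' < n \<and> run_index \<tau> p' = run_index \<tau> p \<and> \<tau> ! p' > \<tau> ! p}
            + card {p'. p' < n \<and> run_index \<tau> p' = run_index \<tau> p + 1 \<and> \<tau> ! p' < \<tau> ! p}))"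

definition maj :: "nat list \<Rightarrow> nat" where
  "maj \<tau> = (\<Sum>i\<in>{i. 1 \<le> i \<and> i < length \<tau> \<and> \<tau> ! (i - 1) > \<tau> ! i}. i)"

definition qint :: "nat \<Rightarrow> 'a::comm_ring_1 \<Rightarrow> 'a" where
  "qint m q = (\<Sum>i<m. q ^ i)"

end

theory Submission
  imports Defs "HOL-Library.Product_Lexorder"
begin

text \<open>Number the runs of \<open>\<tau>\<close> from the last one; this is the level of a car. If \<open>\<tau>\<close> is the diagonal
  word of \<open>f\<close>, then along \<open>\<tau>\<close> the diagonal of \<open>f\<close> drops by exactly one at each descent and is
  constant otherwise, because the cars read row by row form a walk that changes diagonal by at
  most one upwards, and only from a smaller to a larger car. So the diagonals of \<open>f\<close> are the
  levels shifted by the deviation \<open>g\<close>, and \<open>f\<close> is determined by \<open>g\<close> and its list of cars in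
  row order, a shape. The area is then always \<open>maj \<tau>\<close>, and \<open>dinv\<close> counts pairs in the shape plus
  the cars below level \<open>g\<close>.

  The generating function of the shapes compatible with \<open>g\<close> is a product of \<open>q\<close>-integers: insert
  the cars one at a time, those above level \<open>g\<close> from the top, those below from the bottom. A
  ballot-walk identity between adjacent levels shows that, up to the factor \<open>[#cars at level g]\<close>,
  this product \<open>Y\<close> does not depend on \<open>g\<close>. Summing over all \<open>g\<close> gives \<open>[n]_q Y\<close>, the
  parking functions (\<open>g = 0\<close>) give \<open>[k]_q Y\<close>, and the product of the \<open>[w_i]_q\<close> over the
  schedule is \<open>[k]_q Y\<close> as well.\<close>

section \<open>\<open>q\<close>-integers and \<open>q\<close>-factorials\<close>

lemma qint_0 [simp]: "qint 0 q = 0"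
  by (simp add: qint_def)

lemma qint_Suc: "qint (Suc m) q = qint m q + q ^ m"
  by (simp add: qint_def)

lemma qint_Suc_shift: "qint (Suc m) q = 1 + q * qint m q"
  by (simp add: qint_def sum.lessThan_Suc_shift sum_distrib_left del: sum.lessThan_Suc)

lemma qint_add: "qint (a + b) q = qint a q + q ^ a * qint b q"
  by (induction b) (simp_all add: qint_Suc algebra_simps power_add)

definition qfact :: "nat \<Rightarrow> 'a::comm_ring_1 \<Rightarrow> 'a" where
  "qfact m q = (\<Prod>i=1..m. qint i q)"

lemma qfact_Suc: "qfact (Suc m) q = qfact m q * qint (Suc m) q"
  by (simp add: qfact_def)

lemma qfact_eq_qint_mult: "1 \<le> m \<Longrightarrow> qfact m q = qint m q * qfact (m - 1) q"
  by (cases m) (simp_all add: qfact_Suc mult_ac)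


section \<open>Shapes\<close>

text \<open>A shape lists the cars of a preference function in reading order (row by row from the
  bottom); \<open>lv\<close> is the diagonal of a car up to a common shift. Reading a car \<open>y\<close> directly after
  \<open>x\<close> is possible iff \<open>admissible_step lv x y\<close>, and \<open>dinv_pairs\<close> counts the pairs of cars that
  contribute to the first two terms of \<open>dinv\<close>.\<close>

definition admissible_step :: "(nat \<Rightarrow> int) \<Rightarrow> nat \<Rightarrow> nat \<Rightarrow> bool" where
  "admissible_step lv x y \<longleftrightarrow> lv y \<le> lv x + 1 \<and> (lv y = lv x + 1 \<longrightarrow> x < y)"

definition admissible :: "(nat \<Rightarrow> int) \<Rightarrow> nat list \<Rightarrow> bool" where
  "admissible lv L \<longleftrightarrow> successively (admissible_step lv) L"

definition shapes :: "(nat \<Rightarrow> int) \<Rightarrow> nat set \<Rightarrow> nat list set" where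
  "shapes lv X = {L. distinct L \<and> set L = X \<and> admissible lv L}"

definition dinv_pair :: "(nat \<Rightarrow> int) \<Rightarrow> nat \<Rightarrow> nat \<Rightarrow> bool" where
  "dinv_pair lv a b \<longleftrightarrow> (lv a = lv b \<and> a < b) \<or> (lv a = lv b + 1 \<and> b < a)"

fun dinv_pairs :: "(nat \<Rightarrow> int) \<Rightarrow> nat list \<Rightarrow> nat" where
  "dinv_pairs lv [] = 0"
| "dinv_pairs lv (x # xs) = length (filter (dinv_pair lv x) xs) + dinv_pairs lv xs"

definition insert_at :: "nat \<Rightarrow> nat \<Rightarrow> nat list \<Rightarrow> nat list" where
  "insert_at i c L = take i L @ c # drop i L"

definition count_in :: "nat set \<Rightarrow> nat list \<Rightarrow> nat" where
  "count_in S xs = length (filter (\<lambda>x. x \<in> S) xs)"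

lemma admissible_append:
  "admissible lv (A @ B) \<longleftrightarrow>
     admissible lv A \<and> admissible lv B \<and> (A = [] \<or> B = [] \<or> admissible_step lv (last A) (hd B))"
  unfolding admissible_def by (rule successively_append_iff)

lemma admissible_append_Cons:
  "admissible lv (A @ c # B) \<longleftrightarrow> admissible lv A \<and> admissible lv B
     \<and> (A = [] \<or> admissible_step lv (last A) c) \<and> (B = [] \<or> admissible_step lv c (hd B))"
  unfolding admissible_def successively_append_iff successively_Cons by auto

lemma finite_shapes: "finite X \<Longrightarrow> finite (shapes lv X)"
proof -
  assume "finite X"
  have "shapes lv X \<subseteq> {L. set L \<subseteq> X \<and> length L = card X}"
    unfolding shapes_def using distinct_card by fastforce
  moreover have "finite {L. set L \<subseteq> X \<and> length L = card X}"
    using \<open>finite X\<close> by (rule finite_lists_length_eq)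
  ultimately show ?thesis by (rule finite_subset)
qed

lemma shapes_singleton: "shapes lv {c} = {[c]}"
proof (rule set_eqI, rule iffI)
  fix L assume "L \<in> shapes lv {c}"
  then have d: "distinct L" and s: "set L = {c}" by (auto simp: shapes_def)
  then have "length L = 1" using distinct_card[OF d] by simp
  then obtain x where "L = [x]" by (metis One_nat_def length_0_conv length_Suc_conv)
  then show "L \<in> {[c]}" using s by simp
qed (simp add: shapes_def admissible_def)

lemma shapes_nonempty: "L \<in> shapes lv X \<Longrightarrow> X \<noteq> {} \<Longrightarrow> L \<noteq> []"
  by (auto simp: shapes_def)

lemma dinv_pairs_insert:
  "dinv_pairs lv (A @ c # B)
     = dinv_pairs lv (A @ B) + length (filter (dinv_pair lv c) B) + length (filter (\<lambda>x. dinv_pair lv x c) A)"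
  by (induction A) auto

lemma count_in_eq_card: "distinct xs \<Longrightarrow> S \<subseteq> set xs \<Longrightarrow> count_in S xs = card S"
proof -
  assume d: "distinct xs" and s: "S \<subseteq> set xs"
  have "count_in S xs = card (set (filter (\<lambda>x. x \<in> S) xs))"
    unfolding count_in_def by (metis d distinct_card distinct_filter)
  also have "set (filter (\<lambda>x. x \<in> S) xs) = S" using s by auto
  finally show ?thesis .
qed

lemma sum_pow_count_in_drop:
  "(\<Sum>i<length xs. if xs ! i \<in> S then q ^ count_in S (drop (Suc i) xs) else 0) = qint (count_in S xs) q"
proof (induction xs)
  case (Cons x xs)
  let ?F = "\<lambda>ys i. if ys ! i \<in> S then q ^ count_in S (drop (Suc i) ys) else 0"
  have "(\<Sum>i<length (x#xs). ?F (x#xs) i) = ?F (x#xs) 0 + (\<Sum>i<length xs. ?F (x#xs) (Suc i))"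
    by (simp only: length_Cons sum.lessThan_Suc_shift)
  also have "(\<Sum>i<length xs. ?F (x#xs) (Suc i)) = (\<Sum>i<length xs. ?F xs i)"
    by (simp cong: if_cong)
  finally show ?case
    using Cons by (simp add: count_in_def qint_Suc)
qed (simp add: count_in_def)

lemma sum_pow_count_in_take:
  "(\<Sum>i<length xs. if xs ! i \<in> S then q ^ count_in S (take i xs) else 0) = qint (count_in S xs) q"
proof (induction xs)
  case (Cons x xs)
  let ?F = "\<lambda>ys i. if ys ! i \<in> S then q ^ count_in S (take i ys) else 0"
  have "(\<Sum>i<length (x#xs). ?F (x#xs) i) = ?F (x#xs) 0 + (\<Sum>i<length xs. ?F (x#xs) (Suc i))"
    by (simp only: length_Cons sum.lessThan_Suc_shift)
  also have "(\<Sum>i<length xs. ?F (x#xs) (Suc i)) = (if x \<in> S then q else 1) * (\<Sum>i<length xs. ?F xs i)"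
    by (auto simp: sum_distrib_left count_in_def intro!: sum.cong)
  finally show ?case
    using Cons by (simp add: count_in_def qint_Suc_shift)
qed (simp add: count_in_def)

text \<open>Slot \<open>i\<close> of a list is the gap before its \<open>i\<close>-th entry; the flag \<open>z\<close> decides whether the
  extreme slot (first, resp. last) is allowed regardless of its neighbour.\<close>

lemma sum_slots_after:
  "(\<Sum>i\<in>{i. i \<le> length xs \<and> (i = 0 \<or> xs!(i-1) \<in> S) \<and> (i = 0 \<longrightarrow> z)}. q ^ count_in S (drop i xs))
     = qint (count_in S xs + (if z then 1 else 0)) q"
proof -
  let ?A = "{i \<in> {..<length xs}. xs ! i \<in> S}"
  have eq: "{i. i \<le> length xs \<and> (i = 0 \<or> xs!(i-1) \<in> S) \<and> (i = 0 \<longrightarrow> z)}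
      = (if z then {0} else {}) \<union> Suc ` ?A"
  proof (rule set_eqI)
    show "i \<in> {i. i \<le> length xs \<and> (i = 0 \<or> xs!(i-1) \<in> S) \<and> (i = 0 \<longrightarrow> z)}
        \<longleftrightarrow> i \<in> (if z then {0} else {}) \<union> Suc ` ?A" for i
      by (cases i) auto
  qed
  have "(\<Sum>i\<in>Suc ` ?A. q ^ count_in S (drop i xs)) = (\<Sum>i\<in>?A. q ^ count_in S (drop (Suc i) xs))"
    by (subst sum.reindex) auto
  also have "\<dots> = qint (count_in S xs) q"
    by (subst sum.inter_filter) (auto simp: sum_pow_count_in_drop)
  finally show ?thesis
    unfolding eq by (subst sum.union_disjoint) (auto simp: qint_Suc)
qed

lemma sum_slots_before:
  "(\<Sum>i\<in>{i. i \<le> length xs \<and> (i = length xs \<or> xs!i \<in> S) \<and> (i = length xs \<longrightarrow> z)}. q ^ count_in S (take i xs))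
     = qint (count_in S xs + (if z then 1 else 0)) q"
proof -
  let ?A = "{i \<in> {..<length xs}. xs ! i \<in> S}"
  have eq: "{i. i \<le> length xs \<and> (i = length xs \<or> xs!i \<in> S) \<and> (i = length xs \<longrightarrow> z)}
      = (if z then {length xs} else {}) \<union> ?A"
    by auto
  have "(\<Sum>i\<in>?A. q ^ count_in S (take i xs)) = qint (count_in S xs) q"
    by (subst sum.inter_filter) (auto simp: sum_pow_count_in_take)
  then show ?thesis
    unfolding eq by (subst sum.union_disjoint) (auto simp: qint_Suc)
qed

lemma remove1_insert_at: "c \<notin> set L \<Longrightarrow> remove1 c (insert_at i c L) = L"
proof -
  assume "c \<notin> set L"
  then have "c \<notin> set (take i L)" by (meson in_set_takeD)
  then show ?thesis by (simp add: insert_at_def remove1_append)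
qed

lemma set_insert_at: "set (insert_at i c L) = insert c (set L)"
proof -
  have "set L = set (take i L) \<union> set (drop i L)" by (metis append_take_drop_id set_append)
  then show ?thesis by (auto simp: insert_at_def)
qed

lemma distinct_insert_at: "distinct L \<Longrightarrow> c \<notin> set L \<Longrightarrow> distinct (insert_at i c L)"
proof -
  assume d: "distinct L" and c: "c \<notin> set L"
  have "distinct (take i L @ drop i L)" using d by simp
  moreover have "c \<notin> set (take i L)" "c \<notin> set (drop i L)" using c by (meson in_set_takeD in_set_dropD)+
  ultimately show ?thesis by (simp only: insert_at_def distinct_append) simp
qed

lemma inj_on_insert_at: "c \<notin> set L \<Longrightarrow> inj_on (\<lambda>i. insert_at i c L) {i. i \<le> length L}"
proof (rule inj_onI)
  fix i j assume c: "c \<notin> set L" and i: "i \<in> {i. i \<le> length L}" and j: "j \<in> {i. i \<le> length L}"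
    and e: "insert_at i c L = insert_at j c L"
  have tw: "takeWhile (\<lambda>x. x \<noteq> c) (insert_at i c L) = take i L" for i
  proof -
    have "c \<notin> set (take i L)" using c by (meson in_set_takeD)
    then show ?thesis unfolding insert_at_def by (subst takeWhile_append2) auto
  qed
  have "take i L = take j L" using tw[of i] tw[of j] e by simp
  then have "length (take i L) = length (take j L)" by simp
  then show "i = j" using i j by simp
qed

lemma hd_insert_at: "L \<noteq> [] \<Longrightarrow> hd (insert_at i c L) = (if i = 0 then c else hd L)"
  by (cases L) (auto simp: insert_at_def)

lemma last_insert_at: "last (insert_at i c L) = (if length L \<le> i then c else last L)"
  by (auto simp: insert_at_def)

lemma shapes_remove1:
  assumes cX: "c \<notin> X"
    and D: "\<And>A B. admissible lv (A @ c # B) \<Longrightarrow> set A \<subseteq> X \<Longrightarrow> set B \<subseteq> X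
              \<Longrightarrow> admissible lv (A @ B) \<and> P (A @ B) (length A)"
    and L: "L \<in> shapes lv (insert c X)"
  obtains i where "remove1 c L \<in> shapes lv X" "i \<le> length (remove1 c L)" "P (remove1 c L) i"
    "L = insert_at i c (remove1 c L)"
proof -
  from L have dL: "distinct L" and sL: "set L = insert c X" and aL: "admissible lv L"
    by (auto simp: shapes_def)
  obtain A B where AB: "L = A @ c # B" using sL by (metis insertI1 split_list)
  from dL AB have cA: "c \<notin> set A" and cB: "c \<notin> set B" by auto
  have r: "remove1 c L = A @ B" using AB cA by (simp add: remove1_append)
  have sA: "set A \<subseteq> X" and sB: "set B \<subseteq> X" using sL AB cA cB by auto
  have "admissible lv (A @ B) \<and> P (A @ B) (length A)" using D[OF _ sA sB] aL AB by simp
  moreover have "distinct (A @ B)" "set (A @ B) = X" using dL sL AB cA cB cX by auto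
  ultimately show ?thesis using that[of "length A"] r AB by (simp add: shapes_def insert_at_def)
qed

lemma shapes_fibre:
  assumes cX: "c \<notin> X"
    and D: "\<And>A B. admissible lv (A @ c # B) \<Longrightarrow> set A \<subseteq> X \<Longrightarrow> set B \<subseteq> X
              \<Longrightarrow> admissible lv (A @ B) \<and> P (A @ B) (length A)"
    and I: "\<And>L' i. L' \<in> shapes lv X \<Longrightarrow> i \<le> length L' \<Longrightarrow> P L' i \<Longrightarrow> admissible lv (insert_at i c L')"
    and H: "\<And>L' i. L' \<in> shapes lv X \<Longrightarrow> i \<le> length L' \<Longrightarrow> P L' i
              \<Longrightarrow> (Q (insert_at i c L') \<longleftrightarrow> Q' L' \<and> Pz L' i)"
    and L': "L' \<in> shapes lv X" "Q' L'"
  shows "{L\<in>shapes lv (insert c X). Q L \<and> remove1 c L = L'}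
       = (\<lambda>i. insert_at i c L') ` {i. i \<le> length L' \<and> P L' i \<and> Pz L' i}"
proof (rule set_eqI, rule iffI)
  fix L assume "L \<in> {L\<in>shapes lv (insert c X). Q L \<and> remove1 c L = L'}"
  then have L: "L \<in> shapes lv (insert c X)" "Q L" "remove1 c L = L'" by auto
  obtain i where "i \<le> length L'" "P L' i" "L = insert_at i c L'"
    using shapes_remove1[OF cX D L(1)] unfolding L(3) by blast
  then show "L \<in> (\<lambda>i. insert_at i c L') ` {i. i \<le> length L' \<and> P L' i \<and> Pz L' i}"
    using H[OF L'(1)] L(2) by auto
next
  fix L assume "L \<in> (\<lambda>i. insert_at i c L') ` {i. i \<le> length L' \<and> P L' i \<and> Pz L' i}"
  then obtain i where i: "i \<le> length L'" "P L' i" "Pz L' i" and L: "L = insert_at i c L'" by auto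
  have cL': "c \<notin> set L'" using L'(1) cX by (auto simp: shapes_def)
  show "L \<in> {L\<in>shapes lv (insert c X). Q L \<and> remove1 c L = L'}"
    using L' cL' I[OF L'(1) i(1,2)] H[OF L'(1) i(1,2)] i(3)
    by (auto simp: L shapes_def distinct_insert_at set_insert_at remove1_insert_at)
qed

text \<open>The generating function of the shapes on \<open>insert c X\<close> is obtained by deleting \<open>c\<close>:
  \<open>D\<close> and \<open>I\<close> say which slots of a shape on \<open>X\<close> may receive \<open>c\<close>, \<open>H\<close> how the side condition
  \<open>Q\<close> transforms, and \<open>W\<close> evaluates the sum over one fibre.\<close>

lemma shape_sum_insert:
  fixes q :: "'a::comm_ring_1"
  assumes fin: "finite X" and cX: "c \<notin> X"
    and D: "\<And>A B. admissible lv (A @ c # B) \<Longrightarrow> set A \<subseteq> X \<Longrightarrow> set B \<subseteq> X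
              \<Longrightarrow> admissible lv (A @ B) \<and> P (A @ B) (length A)"
    and I: "\<And>L' i. L' \<in> shapes lv X \<Longrightarrow> i \<le> length L' \<Longrightarrow> P L' i \<Longrightarrow> admissible lv (insert_at i c L')"
    and H: "\<And>L' i. L' \<in> shapes lv X \<Longrightarrow> i \<le> length L' \<Longrightarrow> P L' i
              \<Longrightarrow> (Q (insert_at i c L') \<longleftrightarrow> Q' L' \<and> Pz L' i)"
    and W: "\<And>L'. L' \<in> shapes lv X \<Longrightarrow> Q' L' \<Longrightarrow>
       (\<Sum>i\<in>{i. i \<le> length L' \<and> P L' i \<and> Pz L' i}. q ^ dinv_pairs lv (insert_at i c L'))
         = q ^ dinv_pairs lv L' * K"
  shows "(\<Sum>L\<in>{L\<in>shapes lv (insert c X). Q L}. q ^ dinv_pairs lv L)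
       = (\<Sum>L'\<in>{L'\<in>shapes lv X. Q' L'}. q ^ dinv_pairs lv L') * K"
proof -
  let ?S = "{L\<in>shapes lv (insert c X). Q L}" and ?T = "{L'\<in>shapes lv X. Q' L'}"
  have img: "remove1 c ` ?S \<subseteq> ?T"
  proof
    fix L' assume "L' \<in> remove1 c ` ?S"
    then obtain L where L: "L \<in> shapes lv (insert c X)" "Q L" and L': "L' = remove1 c L" by auto
    obtain i where "L' \<in> shapes lv X" "i \<le> length L'" "P L' i" "L = insert_at i c L'"
      using shapes_remove1[OF cX D L(1)] unfolding L' by blast
    then show "L' \<in> ?T" using H L(2) by auto
  qed
  have fibre_sum: "(\<Sum>L\<in>{L\<in>?S. remove1 c L = L'}. q ^ dinv_pairs lv L) = q ^ dinv_pairs lv L' * K"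
    if "L' \<in> ?T" for L'
  proof -
    have L'S: "L' \<in> shapes lv X" and QL': "Q' L'" and cL': "c \<notin> set L'"
      using that cX by (auto simp: shapes_def)
    have "{L\<in>?S. remove1 c L = L'} = (\<lambda>i. insert_at i c L') ` {i. i \<le> length L' \<and> P L' i \<and> Pz L' i}"
      using shapes_fibre[where P = P and Pz = Pz and Q = Q and Q' = Q', OF cX D I H L'S QL'] by simp
    then have "(\<Sum>L\<in>{L\<in>?S. remove1 c L = L'}. q ^ dinv_pairs lv L)
        = (\<Sum>i\<in>{i. i \<le> length L' \<and> P L' i \<and> Pz L' i}. q ^ dinv_pairs lv (insert_at i c L'))"
      by (simp only:) (rule sum.reindex_cong[OF inj_on_subset[OF inj_on_insert_at[OF cL']]]; auto)
    then show ?thesis using W[OF L'S QL'] by simp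
  qed
  have "finite ?S" "finite ?T" using finite_shapes fin by auto
  then have "(\<Sum>L\<in>?S. q ^ dinv_pairs lv L) = (\<Sum>L'\<in>?T. \<Sum>L\<in>{L\<in>?S. remove1 c L = L'}. q ^ dinv_pairs lv L)"
    by (rule sum.group[symmetric, OF _ _ img])
  also have "\<dots> = (\<Sum>L'\<in>?T. q ^ dinv_pairs lv L' * K)"
    by (rule sum.cong[OF refl fibre_sum])
  also have "\<dots> = (\<Sum>L'\<in>?T. q ^ dinv_pairs lv L') * K"
    by (simp add: sum_distrib_right)
  finally show ?thesis .
qed

definition top_slots :: "(nat \<Rightarrow> int) \<Rightarrow> nat set \<Rightarrow> nat \<Rightarrow> nat set" where
  "top_slots lv X c = {x\<in>X. lv x = lv c \<or> (lv x + 1 = lv c \<and> x < c)}"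

definition bottom_slots :: "(nat \<Rightarrow> int) \<Rightarrow> nat set \<Rightarrow> nat \<Rightarrow> nat set" where
  "bottom_slots lv X c = {x\<in>X. lv x = lv c \<or> (lv x = lv c + 1 \<and> c < x)}"

text \<open>A car \<open>c\<close> of maximal level, smallest among the cars of that level, can be inserted into a
  shape exactly after the cars of \<open>top_slots\<close> (or at the front), and every insertion adds one
  \<open>dinv\<close> pair for each such car to its right.\<close>

locale top_insertion =
  fixes lv :: "nat \<Rightarrow> int" and X :: "nat set" and c :: nat
  assumes c_notin: "c \<notin> X"
    and level_le: "\<And>x. x \<in> X \<Longrightarrow> lv x \<le> lv c"
    and less_if_level_eq: "\<And>x. x \<in> X \<Longrightarrow> lv x = lv c \<Longrightarrow> c < x"
begin

lemma step_to_iff: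
  assumes "p \<in> X"
  shows "admissible_step lv p c \<longleftrightarrow> p \<in> top_slots lv X c"
proof -
  have "lv p = lv c \<or> lv p + 1 = lv c \<or> lv p + 1 < lv c" using level_le[OF assms] by arith
  then show ?thesis using assms unfolding admissible_step_def top_slots_def by (elim disjE) auto
qed

lemma step_from: "y \<in> X \<Longrightarrow> admissible_step lv c y"
  using level_le[of y] by (simp add: admissible_step_def)

lemma admissible_remove:
  assumes "admissible lv (A @ c # B)" "set A \<subseteq> X" "set B \<subseteq> X"
  shows "admissible lv (A @ B) \<and> (length A = 0 \<or> (A @ B) ! (length A - 1) \<in> top_slots lv X c)"
proof -
  from assms(1) have A: "admissible lv A" and B: "admissible lv B" and l: "A = [] \<or> admissible_step lv (last A) c"
    unfolding admissible_append_Cons by auto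
  have skip: "admissible_step lv p y" if "p \<in> X" "y \<in> X" "admissible_step lv p c" for p y
    using level_le[OF that(1)] level_le[OF that(2)] less_if_level_eq[OF that(2)] that(3)
    unfolding admissible_step_def by fastforce
  have "admissible_step lv (last A) (hd B)" if "A \<noteq> []" "B \<noteq> []"
  proof (rule skip)
    show "last A \<in> X" "hd B \<in> X" using that assms(2,3) by auto
    show "admissible_step lv (last A) c" using l that(1) by simp
  qed
  then have "admissible lv (A @ B)" unfolding admissible_append using A B by blast
  moreover have "(A @ B) ! (length A - 1) \<in> top_slots lv X c" if "A \<noteq> []"
  proof -
    have "(A @ B) ! (length A - 1) = last A" using that by (simp add: nth_append last_conv_nth)
    moreover have "last A \<in> X" using that assms(2) by auto
    ultimately show ?thesis using l that step_to_iff by simp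
  qed
  ultimately show ?thesis by (cases "A = []") simp_all
qed

lemma admissible_insert:
  assumes L': "L' \<in> shapes lv X" and i: "i \<le> length L'" and slot: "i = 0 \<or> L' ! (i - 1) \<in> top_slots lv X c"
  shows "admissible lv (insert_at i c L')"
proof -
  have sL: "set L' = X" and "admissible lv (take i L' @ drop i L')" using L' by (auto simp: shapes_def)
  then have "admissible lv (take i L')" "admissible lv (drop i L')" unfolding admissible_append by auto
  moreover have "take i L' = [] \<or> admissible_step lv (last (take i L')) c"
  proof (cases "i = 0")
    case False
    then have "last (take i L') = L' ! (i - 1)" using i by (subst last_conv_nth) auto
    moreover have "L' ! (i - 1) \<in> X" using sL i False by auto
    ultimately show ?thesis using slot False step_to_iff by auto
  qed simp
  moreover have "drop i L' = [] \<or> admissible_step lv c (hd (drop i L'))"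
    using sL step_from by (metis hd_in_set in_set_dropD)
  ultimately show ?thesis unfolding insert_at_def admissible_append_Cons by blast
qed

lemma dinv_pairs_insert_at:
  assumes "set L' = X"
  shows "dinv_pairs lv (insert_at i c L') = dinv_pairs lv L' + count_in (top_slots lv X c) (drop i L')"
proof -
  have "filter (dinv_pair lv c) (drop i L') = filter (\<lambda>x. x \<in> top_slots lv X c) (drop i L')"
    using assms less_if_level_eq
    by (intro filter_cong) (auto simp: dinv_pair_def top_slots_def dest: in_set_dropD)
  moreover have "filter (\<lambda>x. dinv_pair lv x c) (take i L') = []"
    using assms less_if_level_eq level_le
    by (fastforce simp: filter_empty_conv dinv_pair_def dest: in_set_takeD)
  ultimately show ?thesis
    unfolding insert_at_def dinv_pairs_insert by (simp add: count_in_def)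
qed

lemma shape_sum:
  fixes q :: "'a::comm_ring_1"
  assumes fin: "finite X"
    and H: "\<And>L' i. L' \<in> shapes lv X \<Longrightarrow> i \<le> length L' \<Longrightarrow> (i = 0 \<or> L' ! (i - 1) \<in> top_slots lv X c)
              \<Longrightarrow> (Q (insert_at i c L') \<longleftrightarrow> Q' L' \<and> (i = 0 \<longrightarrow> z))"
  shows "(\<Sum>L\<in>{L\<in>shapes lv (insert c X). Q L}. q ^ dinv_pairs lv L)
       = (\<Sum>L'\<in>{L'\<in>shapes lv X. Q' L'}. q ^ dinv_pairs lv L')
         * qint (card (top_slots lv X c) + (if z then 1 else 0)) q"
proof (rule shape_sum_insert[where P = "\<lambda>L' i. i = 0 \<or> L' ! (i - 1) \<in> top_slots lv X c"
      and Pz = "\<lambda>L' i. i = 0 \<longrightarrow> z", OF fin c_notin admissible_remove admissible_insert H])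
  fix L' assume L': "L' \<in> shapes lv X"
  then have sL: "set L' = X" and "distinct L'" by (auto simp: shapes_def)
  then have card: "count_in (top_slots lv X c) L' = card (top_slots lv X c)"
    by (intro count_in_eq_card) (auto simp: top_slots_def)
  let ?I = "{i. i \<le> length L' \<and> (i = 0 \<or> L' ! (i - 1) \<in> top_slots lv X c) \<and> (i = 0 \<longrightarrow> z)}"
  have "(\<Sum>i\<in>?I. q ^ dinv_pairs lv (insert_at i c L'))
      = (\<Sum>i\<in>?I. q ^ dinv_pairs lv L' * q ^ count_in (top_slots lv X c) (drop i L'))"
    by (rule sum.cong[OF refl]) (simp add: dinv_pairs_insert_at[OF sL] power_add)
  also have "\<dots> = q ^ dinv_pairs lv L' * qint (card (top_slots lv X c) + (if z then 1 else 0)) q"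
    by (simp only: sum_distrib_left[symmetric] sum_slots_after card)
  finally show "(\<Sum>i\<in>?I. q ^ dinv_pairs lv (insert_at i c L'))
      = q ^ dinv_pairs lv L' * qint (card (top_slots lv X c) + (if z then 1 else 0)) q" .
qed

end

locale bottom_insertion =
  fixes lv :: "nat \<Rightarrow> int" and X :: "nat set" and c :: nat
  assumes c_notin: "c \<notin> X"
    and level_ge: "\<And>x. x \<in> X \<Longrightarrow> lv c \<le> lv x"
    and greater_if_level_eq: "\<And>x. x \<in> X \<Longrightarrow> lv x = lv c \<Longrightarrow> x < c"
begin

lemma step_from_iff:
  assumes "y \<in> X"
  shows "admissible_step lv c y \<longleftrightarrow> y \<in> bottom_slots lv X c"
proof -
  have "lv y = lv c \<or> lv y = lv c + 1 \<or> lv c + 1 < lv y" using level_ge[OF assms] by arith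
  then show ?thesis using assms unfolding admissible_step_def bottom_slots_def by (elim disjE) auto
qed

lemma step_to: "p \<in> X \<Longrightarrow> admissible_step lv p c"
  using level_ge[of p] by (simp add: admissible_step_def)

lemma admissible_remove:
  assumes "admissible lv (A @ c # B)" "set A \<subseteq> X" "set B \<subseteq> X"
  shows "admissible lv (A @ B) \<and> (length A = length (A @ B) \<or> (A @ B) ! length A \<in> bottom_slots lv X c)"
proof -
  from assms(1) have A: "admissible lv A" and B: "admissible lv B" and l: "B = [] \<or> admissible_step lv c (hd B)"
    unfolding admissible_append_Cons by auto
  have skip: "admissible_step lv p y" if "p \<in> X" "y \<in> X" "admissible_step lv c y" for p y
    using level_ge[OF that(1)] level_ge[OF that(2)] greater_if_level_eq[OF that(1)] that(3)
    by (auto simp: admissible_step_def)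
  have "admissible_step lv (last A) (hd B)" if "A \<noteq> []" "B \<noteq> []"
  proof (rule skip)
    show "last A \<in> X" "hd B \<in> X" using that assms(2,3) by auto
    show "admissible_step lv c (hd B)" using l that(2) by simp
  qed
  then have "admissible lv (A @ B)" unfolding admissible_append using A B by blast
  moreover have "(A @ B) ! length A \<in> bottom_slots lv X c" if "B \<noteq> []"
  proof -
    have "(A @ B) ! length A = hd B" using that by (simp add: nth_append hd_conv_nth)
    moreover have "hd B \<in> X" using that assms(3) by auto
    ultimately show ?thesis using l that step_from_iff by simp
  qed
  ultimately show ?thesis by (cases "B = []") simp_all
qed

lemma admissible_insert:
  assumes L': "L' \<in> shapes lv X" and i: "i \<le> length L'"
    and slot: "i = length L' \<or> L' ! i \<in> bottom_slots lv X c"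
  shows "admissible lv (insert_at i c L')"
proof -
  have sL: "set L' = X" and "admissible lv (take i L' @ drop i L')" using L' by (auto simp: shapes_def)
  then have "admissible lv (take i L')" "admissible lv (drop i L')" unfolding admissible_append by auto
  moreover have "take i L' = [] \<or> admissible_step lv (last (take i L')) c"
    using sL step_to by (metis last_in_set in_set_takeD)
  moreover have "drop i L' = [] \<or> admissible_step lv c (hd (drop i L'))"
  proof (cases "i = length L'")
    case False
    then have "hd (drop i L') = L' ! i" using i by (simp add: hd_drop_conv_nth)
    moreover have "L' ! i \<in> X" using sL i False by auto
    ultimately show ?thesis using slot False step_from_iff by auto
  qed simp
  ultimately show ?thesis unfolding insert_at_def admissible_append_Cons by blast
qed

lemma dinv_pairs_insert_at:
  assumes "set L' = X"
  shows "dinv_pairs lv (insert_at i c L') = dinv_pairs lv L' + count_in (bottom_slots lv X c) (take i L')"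
proof -
  have "\<not> dinv_pair lv c y" if "y \<in> X" for y
    using greater_if_level_eq[OF that] level_ge[OF that] by (auto simp: dinv_pair_def)
  then have "filter (dinv_pair lv c) (drop i L') = []"
    using assms by (auto simp: filter_empty_conv dest: in_set_dropD)
  moreover have "filter (\<lambda>x. dinv_pair lv x c) (take i L') = filter (\<lambda>x. x \<in> bottom_slots lv X c) (take i L')"
    using assms greater_if_level_eq
    by (intro filter_cong) (auto simp: dinv_pair_def bottom_slots_def dest: in_set_takeD)
  ultimately show ?thesis
    unfolding insert_at_def dinv_pairs_insert by (simp add: count_in_def)
qed

lemma shape_sum:
  fixes q :: "'a::comm_ring_1"
  assumes fin: "finite X"
    and H: "\<And>L' i. L' \<in> shapes lv X \<Longrightarrow> i \<le> length L' \<Longrightarrow> (i = length L' \<or> L' ! i \<in> bottom_slots lv X c)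
              \<Longrightarrow> (Q (insert_at i c L') \<longleftrightarrow> Q' L' \<and> (i = length L' \<longrightarrow> z))"
  shows "(\<Sum>L\<in>{L\<in>shapes lv (insert c X). Q L}. q ^ dinv_pairs lv L)
       = (\<Sum>L'\<in>{L'\<in>shapes lv X. Q' L'}. q ^ dinv_pairs lv L')
         * qint (card (bottom_slots lv X c) + (if z then 1 else 0)) q"
proof (rule shape_sum_insert[where P = "\<lambda>L' i. i = length L' \<or> L' ! i \<in> bottom_slots lv X c"
      and Pz = "\<lambda>L' i. i = length L' \<longrightarrow> z", OF fin c_notin admissible_remove admissible_insert H])
  fix L' assume L': "L' \<in> shapes lv X"
  then have sL: "set L' = X" and "distinct L'" by (auto simp: shapes_def)
  then have card: "count_in (bottom_slots lv X c) L' = card (bottom_slots lv X c)"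
    by (intro count_in_eq_card) (auto simp: bottom_slots_def)
  let ?I = "{i. i \<le> length L' \<and> (i = length L' \<or> L' ! i \<in> bottom_slots lv X c) \<and> (i = length L' \<longrightarrow> z)}"
  have "(\<Sum>i\<in>?I. q ^ dinv_pairs lv (insert_at i c L'))
      = (\<Sum>i\<in>?I. q ^ dinv_pairs lv L' * q ^ count_in (bottom_slots lv X c) (take i L'))"
    by (rule sum.cong[OF refl]) (simp add: dinv_pairs_insert_at[OF sL] power_add)
  also have "\<dots> = q ^ dinv_pairs lv L' * qint (card (bottom_slots lv X c) + (if z then 1 else 0)) q"
    by (simp only: sum_distrib_left[symmetric] sum_slots_before card)
  finally show "(\<Sum>i\<in>?I. q ^ dinv_pairs lv (insert_at i c L'))
      = q ^ dinv_pairs lv L' * qint (card (bottom_slots lv X c) + (if z then 1 else 0)) q" .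
qed

end


section \<open>The generating function of shapes\<close>

text \<open>With diagonals \<open>lv - j\<close>, \<open>straddles lv j L\<close> says that the lattice path of \<open>L\<close> fits into the
  grid: its first car lies weakly below, its last car weakly above the main diagonal.\<close>

definition straddles :: "(nat \<Rightarrow> int) \<Rightarrow> int \<Rightarrow> nat list \<Rightarrow> bool" where
  "straddles lv j L \<longleftrightarrow> lv (hd L) \<le> j \<and> j \<le> lv (last L)"

definition shape_gf :: "(nat \<Rightarrow> int) \<Rightarrow> int \<Rightarrow> nat set \<Rightarrow> 'a::comm_ring_1 \<Rightarrow> 'a" where
  "shape_gf lv j X q = (\<Sum>L\<in>{L\<in>shapes lv X. straddles lv j L}. q ^ dinv_pairs lv L)"

definition top_weight :: "(nat \<Rightarrow> int) \<Rightarrow> nat set \<Rightarrow> nat \<Rightarrow> nat" where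
  "top_weight lv X c = card {x\<in>X. lv x = lv c \<and> c < x} + card {x\<in>X. lv x + 1 = lv c \<and> x < c}"

definition bottom_weight :: "(nat \<Rightarrow> int) \<Rightarrow> nat set \<Rightarrow> nat \<Rightarrow> nat" where
  "bottom_weight lv X c = card {x\<in>X. lv x = lv c \<and> x < c} + card {x\<in>X. lv x = lv c + 1 \<and> c < x}"

context top_insertion
begin

lemma card_top_slots: "finite X \<Longrightarrow> card (top_slots lv X c) = top_weight lv (insert c X) c"
proof -
  assume fin: "finite X"
  let ?A = "{x\<in>insert c X. lv x = lv c \<and> c < x}" and ?B = "{x\<in>insert c X. lv x + 1 = lv c \<and> x < c}"
  have "top_slots lv X c = ?A \<union> ?B"
    using less_if_level_eq c_notin by (auto simp: top_slots_def)
  moreover have "card (?A \<union> ?B) = card ?A + card ?B"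
    by (rule card_Un_disjoint) (use fin in auto)
  ultimately show ?thesis by (simp add: top_weight_def)
qed

lemma top_weight_insert: "x \<in> X \<Longrightarrow> top_weight lv (insert c X) x = top_weight lv X x"
  using less_if_level_eq[of x] level_le[of x] unfolding top_weight_def
  by (intro arg_cong2[where f = "(+)"] arg_cong[where f = card]) auto

lemma shape_gf_insert_same_level:
  assumes fin: "finite X" and ne: "X \<noteq> {}" and lv_j: "\<And>x. x \<in> insert c X \<Longrightarrow> lv x = j"
  shows "shape_gf lv j (insert c X) q = shape_gf lv j X q * qint (card X + 1) q"
proof -
  have "shape_gf lv j (insert c X) q = shape_gf lv j X q * qint (card (top_slots lv X c) + (if True then 1 else 0)) q"
    unfolding shape_gf_def
  proof (rule shape_sum)
    fix L' i assume L': "L' \<in> shapes lv X" and i: "i \<le> length L'"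
    have "L' \<noteq> []" using shapes_nonempty[OF L' ne] .
    then have "hd L' \<in> X" "last L' \<in> X" "hd (insert_at i c L') \<in> insert c X" "last (insert_at i c L') \<in> insert c X"
      using L' by (auto simp: hd_insert_at last_insert_at shapes_def)
    then show "straddles lv j (insert_at i c L') \<longleftrightarrow> straddles lv j L' \<and> (i = 0 \<longrightarrow> True)"
      using lv_j by (auto simp: straddles_def)
  qed fact
  moreover have "top_slots lv X c = X" using lv_j by (auto simp: top_slots_def)
  ultimately show ?thesis by simp
qed

lemma shape_gf_insert:
  assumes fin: "finite X" and j: "j < lv c" and ex: "\<exists>x\<in>X. lv x = j"
  shows "shape_gf lv j (insert c X) q = shape_gf lv j X q * qint (top_weight lv (insert c X) c) q"
proof -
  have ne: "X \<noteq> {}" using ex by auto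
  have "shape_gf lv j (insert c X) q = shape_gf lv j X q * qint (card (top_slots lv X c) + (if False then 1 else 0)) q"
    unfolding shape_gf_def
  proof (rule shape_sum)
    fix L' i assume L': "L' \<in> shapes lv X" and i: "i \<le> length L'"
      and slot: "i = 0 \<or> L' ! (i - 1) \<in> top_slots lv X c"
    have ne': "L' \<noteq> []" using shapes_nonempty[OF L' ne] .
    show "straddles lv j (insert_at i c L') \<longleftrightarrow> straddles lv j L' \<and> (i = 0 \<longrightarrow> False)"
    proof (cases "i = 0")
      case False
      have "i = length L' \<Longrightarrow> j \<le> lv (last L')"
        using slot False j ne' by (auto simp: last_conv_nth top_slots_def)
      then show ?thesis using False i ne' j by (auto simp: straddles_def hd_insert_at last_insert_at)
    qed (use ne' j in \<open>simp add: straddles_def hd_insert_at\<close>)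
  qed fact
  then show ?thesis using card_top_slots[OF fin] by simp
qed

end

context bottom_insertion
begin

lemma card_bottom_slots: "finite X \<Longrightarrow> card (bottom_slots lv X c) = bottom_weight lv (insert c X) c"
proof -
  assume fin: "finite X"
  let ?A = "{x\<in>insert c X. lv x = lv c \<and> x < c}" and ?B = "{x\<in>insert c X. lv x = lv c + 1 \<and> c < x}"
  have "bottom_slots lv X c = ?A \<union> ?B"
    using greater_if_level_eq c_notin by (auto simp: bottom_slots_def)
  moreover have "card (?A \<union> ?B) = card ?A + card ?B"
    by (rule card_Un_disjoint) (use fin in auto)
  ultimately show ?thesis by (simp add: bottom_weight_def)
qed

lemma bottom_weight_insert: "x \<in> X \<Longrightarrow> bottom_weight lv (insert c X) x = bottom_weight lv X x"
  using greater_if_level_eq[of x] level_ge[of x] unfolding bottom_weight_def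
  by (intro arg_cong2[where f = "(+)"] arg_cong[where f = card]) auto

lemma shape_gf_insert:
  assumes fin: "finite X" and j: "lv c < j" and ex: "\<exists>x\<in>X. lv x = j"
  shows "shape_gf lv j (insert c X) q = shape_gf lv j X q * qint (bottom_weight lv (insert c X) c) q"
proof -
  have ne: "X \<noteq> {}" using ex by auto
  have "shape_gf lv j (insert c X) q
      = shape_gf lv j X q * qint (card (bottom_slots lv X c) + (if False then 1 else 0)) q"
    unfolding shape_gf_def
  proof (rule shape_sum)
    fix L' i assume L': "L' \<in> shapes lv X" and i: "i \<le> length L'"
      and slot: "i = length L' \<or> L' ! i \<in> bottom_slots lv X c"
    have ne': "L' \<noteq> []" using shapes_nonempty[OF L' ne] .
    show "straddles lv j (insert_at i c L') \<longleftrightarrow> straddles lv j L' \<and> (i = length L' \<longrightarrow> False)"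
    proof (cases "i = length L'")
      case False
      have "i = 0 \<Longrightarrow> lv (hd L') \<le> j"
        using slot False j ne' by (auto simp: hd_conv_nth bottom_slots_def)
      then show ?thesis using False i ne' j by (auto simp: straddles_def hd_insert_at last_insert_at)
    qed (use j in \<open>simp add: straddles_def last_insert_at\<close>)
  qed fact
  then show ?thesis using card_bottom_slots[OF fin] by simp
qed

end

lemma obtain_top_insertion:
  assumes "finite X" "X \<noteq> {}"
  obtains c X' where "X = insert c X'" "top_insertion lv X' c"
proof -
  define M where "M = Max (lv ` X)"
  define c where "c = Min {x\<in>X. lv x = M}"
  have "M \<in> lv ` X" using assms unfolding M_def by simp
  then have "c \<in> {x\<in>X. lv x = M}" unfolding c_def using assms(1) by (intro Min_in) auto
  moreover have "lv x \<le> M" if "x \<in> X" for x using assms(1) that unfolding M_def by simp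
  moreover have "c \<le> x" if "x \<in> X" "lv x = M" for x using assms(1) that unfolding c_def by simp
  ultimately have "top_insertion lv (X - {c}) c"
    by unfold_locales (auto, metis le_neq_implies_less)
  then show ?thesis using that[of c "X - {c}"] \<open>c \<in> {x\<in>X. lv x = M}\<close> by blast
qed

lemma obtain_bottom_insertion:
  assumes "finite X" "X \<noteq> {}"
  obtains c X' where "X = insert c X'" "bottom_insertion lv X' c"
proof -
  define m where "m = Min (lv ` X)"
  define c where "c = Max {x\<in>X. lv x = m}"
  have "m \<in> lv ` X" using assms unfolding m_def by simp
  then have "c \<in> {x\<in>X. lv x = m}" unfolding c_def using assms(1) by (intro Max_in) auto
  moreover have "m \<le> lv x" if "x \<in> X" for x using assms(1) that unfolding m_def by simp
  moreover have "x \<le> c" if "x \<in> X" "lv x = m" for x using assms(1) that unfolding c_def by simp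
  ultimately have "bottom_insertion lv (X - {c}) c"
    by unfold_locales (auto, metis le_neq_implies_less)
  then show ?thesis using that[of c "X - {c}"] \<open>c \<in> {x\<in>X. lv x = m}\<close> by blast
qed

lemma shape_gf_single_level:
  assumes "finite X" "X \<noteq> {}" "\<And>x. x \<in> X \<Longrightarrow> lv x = j"
  shows "shape_gf lv j X q = qfact (card X) q"
  using assms
proof (induction "card X" arbitrary: X rule: less_induct)
  case less
  obtain c X' where X: "X = insert c X'" and "top_insertion lv X' c"
    using obtain_top_insertion[OF less.prems(1,2)] by blast
  interpret top_insertion lv X' c by fact
  have fin: "finite X'" using less.prems(1) X by simp
  show ?case
  proof (cases "X' = {}")
    case True
    then have "{L\<in>shapes lv X. straddles lv j L} = {[c]}"
      using X less.prems(3) by (auto simp: shapes_singleton straddles_def)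
    then show ?thesis using X True by (simp add: shape_gf_def qfact_def qint_def)
  next
    case False
    have "shape_gf lv j X' q = qfact (card X') q"
      by (rule less.hyps) (use fin False less.prems(1,3) X c_notin in auto)
    moreover have "shape_gf lv j X q = shape_gf lv j X' q * qint (card X' + 1) q"
      unfolding X by (rule shape_gf_insert_same_level[OF fin False]) (use less.prems(3) X in auto)
    moreover have "card X = Suc (card X')" using X fin c_notin by simp
    ultimately show ?thesis by (simp add: qfact_Suc)
  qed
qed

lemma shape_gf_above:
  fixes q :: "'a::comm_ring_1"
  assumes "finite X" "\<And>x. x \<in> X \<Longrightarrow> j \<le> lv x" "\<exists>x\<in>X. lv x = j"
  shows "shape_gf lv j X q = qfact (card {x\<in>X. lv x = j}) q * (\<Prod>c\<in>{x\<in>X. j < lv x}. qint (top_weight lv X c) q)"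
  using assms
proof (induction "card X" arbitrary: X rule: less_induct)
  case less
  obtain c X' where X: "X = insert c X'" and "top_insertion lv X' c"
    using obtain_top_insertion[OF less.prems(1)] less.prems(3) by blast
  interpret top_insertion lv X' c by fact
  have fin: "finite X'" and card: "card X' < card X" using less.prems(1) X c_notin by auto
  have ge: "j \<le> lv x" if "x \<in> X'" for x using that X less.prems(2) by blast
  have IH: "shape_gf lv j X' q = qfact (card {x\<in>X'. lv x = j}) q * (\<Prod>c\<in>{x\<in>X'. j < lv x}. qint (top_weight lv X' c) q)"
    if "\<exists>x\<in>X'. lv x = j"
    by (rule less.hyps[OF card fin ge that])
  show ?case
  proof (cases "lv c = j")
    case True
    have lv_j: "lv x = j" if "x \<in> X" for x
      using that X level_le less.prems(2) True by (metis antisym insert_iff)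
    then have e: "{x\<in>X. lv x = j} = X" "{x\<in>X. j < lv x} = {}" by auto
    have "shape_gf lv j X q = qfact (card X) q"
      by (rule shape_gf_single_level) (use less.prems lv_j in auto)
    then show ?thesis by (simp only: e prod.empty mult_1_right)
  next
    case False
    then have j: "j < lv c" using less.prems(2) X by force
    have ex: "\<exists>x\<in>X'. lv x = j" using less.prems(3) X j by auto
    have "(\<Prod>x\<in>{x\<in>X'. j < lv x}. qint (top_weight lv X' x) q) = (\<Prod>x\<in>{x\<in>X'. j < lv x}. qint (top_weight lv X x) q)"
      using X top_weight_insert by (intro prod.cong) auto
    moreover have "{x\<in>X. lv x = j} = {x\<in>X'. lv x = j}" "{x\<in>X. j < lv x} = insert c {x\<in>X'. j < lv x}"
      using X j by auto
    moreover have "c \<notin> {x\<in>X'. j < lv x}" "finite {x\<in>X'. j < lv x}" using c_notin fin by auto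
    ultimately show ?thesis
      using shape_gf_insert[OF fin j ex, of q] IH[OF ex] X by (simp add: mult_ac)
  qed
qed

lemma shape_gf_below:
  fixes q :: "'a::comm_ring_1"
  assumes "finite X" "\<exists>x\<in>X. lv x = j"
  shows "shape_gf lv j X q = shape_gf lv j {x\<in>X. j \<le> lv x} q * (\<Prod>c\<in>{x\<in>X. lv x < j}. qint (bottom_weight lv X c) q)"
  using assms
proof (induction "card {x\<in>X. lv x < j}" arbitrary: X rule: less_induct)
  case less
  show ?case
  proof (cases "{x\<in>X. lv x < j} = {}")
    case True
    then have "{x\<in>X. j \<le> lv x} = X" by force
    then show ?thesis unfolding True by simp
  next
    case False
    obtain c X' where X: "X = insert c X'" and "bottom_insertion lv X' c"
      using obtain_bottom_insertion[OF less.prems(1)] less.prems(2) by blast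
    interpret bottom_insertion lv X' c by fact
    have j: "lv c < j" using False X level_ge by force
    have fin: "finite X'" using less.prems(1) X by simp
    have ex: "\<exists>x\<in>X'. lv x = j" using less.prems(2) X j by auto
    have below: "{x\<in>X. lv x < j} = insert c {x\<in>X'. lv x < j}" using X j by auto
    moreover have "c \<notin> {x\<in>X'. lv x < j}" "finite {x\<in>X'. lv x < j}" using c_notin fin by auto
    ultimately have card: "card {x\<in>X'. lv x < j} < card {x\<in>X. lv x < j}" by simp
    have "{x\<in>X. j \<le> lv x} = {x\<in>X'. j \<le> lv x}" using X j by auto
    moreover have "(\<Prod>x\<in>{x\<in>X'. lv x < j}. qint (bottom_weight lv X' x) q) = (\<Prod>x\<in>{x\<in>X'. lv x < j}. qint (bottom_weight lv X x) q)"
      using X bottom_weight_insert by (intro prod.cong) auto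
    moreover note less.hyps[OF card fin ex]
    ultimately show ?thesis
      using shape_gf_insert[OF fin j ex, of q] below X \<open>c \<notin> {x\<in>X'. lv x < j}\<close> \<open>finite {x\<in>X'. lv x < j}\<close>
      by (simp add: mult_ac)
  qed
qed

lemma shape_gf_product:
  fixes q :: "'a::comm_ring_1"
  assumes "finite X" "\<exists>x\<in>X. lv x = j"
  shows "shape_gf lv j X q = qfact (card {x\<in>X. lv x = j}) q * (\<Prod>c\<in>{x\<in>X. j < lv x}. qint (top_weight lv X c) q)
                         * (\<Prod>c\<in>{x\<in>X. lv x < j}. qint (bottom_weight lv X c) q)"
proof -
  let ?H = "{x\<in>X. j \<le> lv x}"
  have "shape_gf lv j ?H q = qfact (card {x\<in>?H. lv x = j}) q * (\<Prod>c\<in>{x\<in>?H. j < lv x}. qint (top_weight lv ?H c) q)"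
    by (rule shape_gf_above) (use assms in auto)
  also have "{x\<in>?H. lv x = j} = {x\<in>X. lv x = j}" by auto
  also have "{x\<in>?H. j < lv x} = {x\<in>X. j < lv x}" by auto
  also have "(\<Prod>c\<in>{x\<in>X. j < lv x}. qint (top_weight lv ?H c) q) = (\<Prod>c\<in>{x\<in>X. j < lv x}. qint (top_weight lv X c) q)"
    unfolding top_weight_def by (intro prod.cong refl arg_cong2[where f = qint] arg_cong2[where f = "(+)"] arg_cong[where f = card]) auto
  finally show ?thesis using shape_gf_below[OF assms, of q] by simp
qed


section \<open>A walk identity\<close>

text \<open>A word over \<open>{up, down}\<close> read from height \<open>s\<close>: \<open>up_weight\<close> collects \<open>[h]\<close> for every up-step
  leaving height \<open>h\<close>, \<open>down_weight\<close> collects \<open>[h]\<close> for every down-step arriving at height \<open>h\<close>.\<close>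

definition qint_of_int :: "int \<Rightarrow> 'a::comm_ring_1 \<Rightarrow> 'a" where
  "qint_of_int s q = qint (nat s) q"

definition qfact_of_int :: "int \<Rightarrow> 'a::comm_ring_1 \<Rightarrow> 'a" where
  "qfact_of_int s q = qfact (nat s) q"

fun up_weight :: "int \<Rightarrow> bool list \<Rightarrow> 'a::comm_ring_1 \<Rightarrow> 'a" where
  "up_weight s [] q = 1"
| "up_weight s (b # w) q =
     (if b then qint_of_int s q * up_weight (s + 1) w q else up_weight (s - 1) w q)"

fun down_weight :: "int \<Rightarrow> bool list \<Rightarrow> 'a::comm_ring_1 \<Rightarrow> 'a" where
  "down_weight s [] q = 1"
| "down_weight s (b # w) q =
     (if b then down_weight (s + 1) w q else qint_of_int (s - 1) q * down_weight (s - 1) w q)"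

definition rise :: "bool list \<Rightarrow> int" where
  "rise w = int (length (filter id w)) - int (length (filter Not w))"

lemma rise_Cons: "rise (b # w) = (if b then rise w + 1 else rise w - 1)"
  by (simp add: rise_def)

lemma qint_of_int_0: "qint_of_int 0 q = 0"
  by (simp add: qint_of_int_def)

lemma qfact_of_int_step: "1 \<le> s \<Longrightarrow> qfact_of_int s q = qfact_of_int (s - 1) q * qint_of_int s q"
proof -
  assume "1 \<le> s"
  then have "nat s = Suc (nat (s - 1))" by simp
  then show ?thesis by (simp add: qfact_of_int_def qint_of_int_def qfact_Suc)
qed

text \<open>A walk from height \<open>\<le> 0\<close> to height \<open>\<ge> 1\<close> has an up-step leaving height \<open>0\<close>, of weight \<open>[0] = 0\<close>.\<close>

lemma up_weight_eq_0: "s \<le> 0 \<Longrightarrow> 1 \<le> s + rise w \<Longrightarrow> up_weight s w q = 0"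
proof (induction w arbitrary: s)
  case Nil
  then show ?case by (simp add: rise_def)
next
  case (Cons b w)
  show ?case
  proof (cases b)
    case True
    show ?thesis
    proof (cases "s = 0")
      case True
      then show ?thesis using \<open>b\<close> by (simp add: qint_of_int_0)
    next
      case False
      then have "up_weight (s + 1) w q = 0" using Cons.IH[of "s+1"] Cons.prems True by (simp add: rise_Cons)
      then show ?thesis using True by simp
    qed
  next
    case False
    then have "up_weight (s - 1) w q = 0" using Cons.IH[of "s-1"] Cons.prems by (simp add: rise_Cons)
    then show ?thesis using False by simp
  qed
qed

lemma walk_weight_identity:
  "1 \<le> s \<Longrightarrow> 1 \<le> s + rise w \<Longrightarrow>
     down_weight s w q * qfact_of_int (s + rise w - 1) q = up_weight s w q * qfact_of_int (s - 1) q"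
proof (induction w arbitrary: s)
  case Nil
  then show ?case by (simp add: rise_def)
next
  case (Cons b w)
  show ?case
  proof (cases b)
    case True
    have IH: "down_weight (s + 1) w q * qfact_of_int (s + 1 + rise w - 1) q = up_weight (s + 1) w q * qfact_of_int (s + 1 - 1) q"
      using Cons.IH[of "s+1"] Cons.prems True by (simp add: rise_Cons)
    have "qfact_of_int s q = qfact_of_int (s - 1) q * qint_of_int s q" using Cons.prems by (simp add: qfact_of_int_step)
    then show ?thesis using IH True by (simp add: rise_Cons algebra_simps)
  next
    case False
    show ?thesis
    proof (cases "s = 1")
      case True
      have "up_weight 0 w q = 0" using up_weight_eq_0[of 0 w] Cons.prems True False by (simp add: rise_Cons)
      then show ?thesis using True False by (simp add: qint_of_int_0)
    next
      case s1: False
      have IH: "down_weight (s - 1) w q * qfact_of_int (s - 1 + rise w - 1) q = up_weight (s - 1) w q * qfact_of_int (s - 1 - 1) q"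
        using Cons.IH[of "s-1"] Cons.prems False s1 by (simp add: rise_Cons)
      have "qfact_of_int (s - 1) q = qfact_of_int (s - 1 - 1) q * qint_of_int (s - 1) q" using Cons.prems s1 by (simp add: qfact_of_int_step)
      then show ?thesis using IH False by (simp add: rise_Cons algebra_simps)
    qed
  qed
qed

text \<open>Merging two disjoint sets of cars in increasing order gives a word; \<open>height\<close> is the height
  at which car \<open>c\<close> is read when the walk starts at \<open>s\<close> (for the first car it is \<open>s\<close> resp. \<open>s - 1\<close>).\<close>

definition height :: "nat set \<Rightarrow> nat set \<Rightarrow> int \<Rightarrow> nat list \<Rightarrow> nat \<Rightarrow> int" where
  "height A B s zs c = s - int (count_in B zs) + int (count_in {y\<in>B. c < y} zs + count_in {y\<in>A. y < c} zs)"

lemma height_Cons_head: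
  assumes "sorted_wrt (<) (z # zs)" "z \<in> A \<union> B" "A \<inter> B = {}"
  shows "height A B s (z # zs) z = (if z \<in> A then s else s - 1)"
proof -
  have "filter (\<lambda>y. y \<in> {y\<in>B. z < y}) zs = filter (\<lambda>y. y \<in> B) zs"
    using assms(1) by (intro filter_cong) auto
  moreover have "filter (\<lambda>y. y \<in> {y\<in>A. y < z}) zs = []"
    using assms(1) by (auto simp: filter_empty_conv)
  ultimately show ?thesis using assms(2,3) by (auto simp: height_def count_in_def)
qed

lemma height_Cons_tail:
  assumes "sorted_wrt (<) (z # zs)" "z \<in> A \<union> B" "A \<inter> B = {}" "c \<in> set zs"
  shows "height A B s (z # zs) c = height A B (if z \<in> A then s + 1 else s - 1) zs c"
proof -
  have "z < c" using assms(1,4) by simp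
  then show ?thesis using assms(2,3) by (auto simp: height_def count_in_def)
qed

lemma up_weight_merge:
  assumes "sorted_wrt (<) zs" "set zs \<subseteq> A \<union> B" "A \<inter> B = {}"
  shows "up_weight s (map (\<lambda>z. z \<in> A) zs) q = (\<Prod>c\<leftarrow>filter (\<lambda>y. y \<in> A) zs. qint_of_int (height A B s zs c) q)"
  using assms
proof (induction zs arbitrary: s)
  case (Cons z zs)
  let ?s' = "if z \<in> A then s + 1 else s - 1"
  have z: "z \<in> A \<union> B" using Cons.prems(2) by simp
  have "up_weight s (map (\<lambda>z. z \<in> A) (z # zs)) q = (if z \<in> A then qint_of_int s q else 1) * up_weight ?s' (map (\<lambda>z. z \<in> A) zs) q"
    by simp
  also have "up_weight ?s' (map (\<lambda>z. z \<in> A) zs) q = (\<Prod>c\<leftarrow>filter (\<lambda>y. y \<in> A) zs. qint_of_int (height A B ?s' zs c) q)"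
    using Cons by simp
  also have "\<dots> = (\<Prod>c\<leftarrow>filter (\<lambda>y. y \<in> A) zs. qint_of_int (height A B s (z # zs) c) q)"
    using height_Cons_tail[OF Cons.prems(1) z Cons.prems(3)]
    by (intro arg_cong[where f = prod_list] map_cong) auto
  finally show ?case
    using height_Cons_head[OF Cons.prems(1) z Cons.prems(3), of s] z Cons.prems(3) by auto
qed simp

lemma down_weight_merge:
  assumes "sorted_wrt (<) zs" "set zs \<subseteq> A \<union> B" "A \<inter> B = {}"
  shows "down_weight s (map (\<lambda>z. z \<in> A) zs) q = (\<Prod>c\<leftarrow>filter (\<lambda>y. y \<in> B) zs. qint_of_int (height A B s zs c) q)"
  using assms
proof (induction zs arbitrary: s)
  case (Cons z zs)
  let ?s' = "if z \<in> A then s + 1 else s - 1"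
  have z: "z \<in> A \<union> B" using Cons.prems(2) by simp
  have "down_weight s (map (\<lambda>z. z \<in> A) (z # zs)) q = (if z \<in> A then 1 else qint_of_int (s - 1) q) * down_weight ?s' (map (\<lambda>z. z \<in> A) zs) q"
    by simp
  also have "down_weight ?s' (map (\<lambda>z. z \<in> A) zs) q = (\<Prod>c\<leftarrow>filter (\<lambda>y. y \<in> B) zs. qint_of_int (height A B ?s' zs c) q)"
    using Cons by simp
  also have "\<dots> = (\<Prod>c\<leftarrow>filter (\<lambda>y. y \<in> B) zs. qint_of_int (height A B s (z # zs) c) q)"
    using height_Cons_tail[OF Cons.prems(1) z Cons.prems(3)]
    by (intro arg_cong[where f = prod_list] map_cong) auto
  finally show ?case
    using height_Cons_head[OF Cons.prems(1) z Cons.prems(3), of s] z Cons.prems(3) by auto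
qed simp

text \<open>This is what makes the weight \<open>level_weight\<close> below independent of the level.\<close>

lemma adjacent_levels_identity:
  fixes q :: "'a::comm_ring_1" and A B :: "nat set"
  assumes finA: "finite A" and finB: "finite B" and dj: "A \<inter> B = {}" and neA: "A \<noteq> {}" and neB: "B \<noteq> {}"
  shows "qfact (card A - 1) q * (\<Prod>c\<in>B. qint (card {y\<in>B. c < y} + card {y\<in>A. y < c}) q)
       = qfact (card B - 1) q * (\<Prod>c\<in>A. qint (card {y\<in>B. c < y} + card {y\<in>A. y < c}) q)"
proof -
  let ?h = "\<lambda>c. card {y\<in>B. c < y} + card {y\<in>A. y < c}"
  define zs where "zs = sorted_list_of_set (A \<union> B)"
  define w where "w = map (\<lambda>z. z \<in> A) zs"
  have so: "sorted_wrt (<) zs" and dz: "distinct zs" and sz: "set zs = A \<union> B"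
    unfolding zs_def using finA finB by auto
  have count: "count_in S zs = card S" if "S \<subseteq> A \<union> B" for S
    using count_in_eq_card[OF dz] that sz by simp
  have ht: "height A B (int (card B)) zs c = int (?h c)" for c
  proof -
    have "count_in B zs = card B" "count_in {y\<in>B. c < y} zs = card {y\<in>B. c < y}"
      "count_in {y\<in>A. y < c} zs = card {y\<in>A. y < c}"
      by (rule count; auto)+
    then show ?thesis by (simp add: height_def)
  qed
  have "filter (\<lambda>y. y \<notin> A) zs = filter (\<lambda>y. y \<in> B) zs"
    using sz dj by (intro filter_cong) auto
  then have rw: "rise w = int (card A) - int (card B)"
    using count[of A] count[of B] by (simp add: rise_def w_def filter_map comp_def count_in_def)
  have pA: "card A \<ge> 1" and pB: "card B \<ge> 1" using finA finB neA neB by (auto simp: Suc_le_eq card_gt_0_iff)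
  have prod: "(\<Prod>c\<leftarrow>filter (\<lambda>y. y \<in> S) zs. qint_of_int (height A B (int (card B)) zs c) q) = (\<Prod>c\<in>S. qint (?h c) q)"
    if "S \<subseteq> A \<union> B" for S
  proof -
    have "set (filter (\<lambda>y. y \<in> S) zs) = S" using that sz by auto
    then show ?thesis
      using prod.distinct_set_conv_list[of "filter (\<lambda>y. y \<in> S) zs" "\<lambda>c. qint (?h c) q"] dz
      by (simp add: ht qint_of_int_def del: of_nat_add)
  qed
  have "down_weight (int (card B)) w q * qfact_of_int (int (card B) + rise w - 1) q
      = up_weight (int (card B)) w q * qfact_of_int (int (card B) - 1) q"
    by (rule walk_weight_identity) (use pA pB rw in auto)
  moreover have "up_weight (int (card B)) w q = (\<Prod>c\<in>A. qint (?h c) q)"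
    unfolding w_def up_weight_merge[OF so _ dj, unfolded sz, OF subset_refl] by (rule prod) auto
  moreover have "down_weight (int (card B)) w q = (\<Prod>c\<in>B. qint (?h c) q)"
    unfolding w_def down_weight_merge[OF so _ dj, unfolded sz, OF subset_refl] by (rule prod) auto
  moreover have "qfact_of_int (int (card B) + rise w - 1) q = qfact (card A - 1) q"
    using rw pA by (simp add: qfact_of_int_def nat_diff_distrib)
  moreover have "qfact_of_int (int (card B) - 1) q = qfact (card B - 1) q"
    using pB by (simp add: qfact_of_int_def nat_diff_distrib)
  ultimately show ?thesis by (simp add: mult_ac)
qed


section \<open>Summing over the levels\<close>

definition level_weight :: "(nat \<Rightarrow> int) \<Rightarrow> nat set \<Rightarrow> int \<Rightarrow> 'a::comm_ring_1 \<Rightarrow> 'a" where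
  "level_weight lv C j q = qfact (card {x\<in>C. lv x = j} - 1) q
     * (\<Prod>c\<in>{x\<in>C. j < lv x}. qint (top_weight lv C c) q) * (\<Prod>c\<in>{x\<in>C. lv x < j}. qint (bottom_weight lv C c) q)"

locale leveled =
  fixes lv :: "nat \<Rightarrow> int" and C :: "nat set" and R :: int
  assumes finite_C: "finite C"
    and level_range: "\<And>c. c \<in> C \<Longrightarrow> 0 \<le> lv c \<and> lv c \<le> R"
    and level_surj: "\<And>j. 0 \<le> j \<Longrightarrow> j \<le> R \<Longrightarrow> \<exists>c\<in>C. lv c = j"
    and R_nonneg: "0 \<le> R"
begin

lemma shape_gf_eq_level_weight:
  "0 \<le> j \<Longrightarrow> j \<le> R \<Longrightarrow> shape_gf lv j C q = qint (card {x\<in>C. lv x = j}) q * level_weight lv C j q"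
proof -
  assume j: "0 \<le> j" "j \<le> R"
  have ne: "1 \<le> card {x\<in>C. lv x = j}" using level_surj[OF j] finite_C by (auto simp: Suc_le_eq card_gt_0_iff)
  show ?thesis using shape_gf_product[OF finite_C level_surj[OF j], of q] qfact_eq_qint_mult[OF ne, of q]
    by (simp add: level_weight_def mult_ac)
qed

lemma level_weight_step:
  fixes q :: "'a::comm_ring_1"
  assumes j: "1 \<le> j" "j \<le> R"
  shows "level_weight lv C j q = level_weight lv C (j - 1) q"
proof -
  let ?A = "{x\<in>C. lv x = j - 1}" and ?B = "{x\<in>C. lv x = j}"
  let ?h = "\<lambda>c. card {y\<in>?B. c < y} + card {y\<in>?A. y < c}"
  have finA: "finite ?A" and finB: "finite ?B" using finite_C by auto
  have neA: "?A \<noteq> {}" using level_surj[of "j-1"] j by auto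
  have neB: "?B \<noteq> {}" using level_surj[of j] j by auto
  have dj: "?A \<inter> ?B = {}" by auto
  have adj: "qfact (card ?A - 1) q * (\<Prod>c\<in>?B. qint (?h c) q) = qfact (card ?B - 1) q * (\<Prod>c\<in>?A. qint (?h c) q)"
    by (rule adjacent_levels_identity[OF finA finB dj neA neB])
  have wB: "top_weight lv C c = ?h c" if "c \<in> ?B" for c
  proof -
    have "{x\<in>C. lv x = lv c \<and> c < x} = {y\<in>?B. c < y}" using that by auto
    moreover have "{x\<in>C. lv x + 1 = lv c \<and> x < c} = {y\<in>?A. y < c}" using that by auto
    ultimately show ?thesis by (simp add: top_weight_def)
  qed
  have sA: "bottom_weight lv C c = ?h c" if "c \<in> ?A" for c
  proof -
    have "{x\<in>C. lv x = lv c \<and> x < c} = {y\<in>?A. y < c}" using that by auto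
    moreover have "{x\<in>C. lv x = lv c + 1 \<and> c < x} = {y\<in>?B. c < y}" using that by auto
    ultimately show ?thesis by (simp add: bottom_weight_def)
  qed
  have s1: "{x\<in>C. j - 1 < lv x} = ?B \<union> {x\<in>C. j < lv x}" by auto
  have s2: "{x\<in>C. lv x < j} = ?A \<union> {x\<in>C. lv x < j - 1}" by auto
  have p1: "(\<Prod>c\<in>{x\<in>C. j - 1 < lv x}. qint (top_weight lv C c) q)
      = (\<Prod>c\<in>?B. qint (?h c) q) * (\<Prod>c\<in>{x\<in>C. j < lv x}. qint (top_weight lv C c) q)"
    unfolding s1 by (subst prod.union_disjoint) (use finite_C wB in auto)
  have p2: "(\<Prod>c\<in>{x\<in>C. lv x < j}. qint (bottom_weight lv C c) q)
      = (\<Prod>c\<in>?A. qint (?h c) q) * (\<Prod>c\<in>{x\<in>C. lv x < j - 1}. qint (bottom_weight lv C c) q)"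
    unfolding s2 by (subst prod.union_disjoint) (use finite_C sA in auto)
  have "level_weight lv C (j - 1) q = (qfact (card ?A - 1) q * (\<Prod>c\<in>?B. qint (?h c) q))
      * (\<Prod>c\<in>{x\<in>C. j < lv x}. qint (top_weight lv C c) q) * (\<Prod>c\<in>{x\<in>C. lv x < j - 1}. qint (bottom_weight lv C c) q)"
    unfolding level_weight_def p1 by (simp add: mult_ac)
  also have "\<dots> = (qfact (card ?B - 1) q * (\<Prod>c\<in>?A. qint (?h c) q))
      * (\<Prod>c\<in>{x\<in>C. j < lv x}. qint (top_weight lv C c) q) * (\<Prod>c\<in>{x\<in>C. lv x < j - 1}. qint (bottom_weight lv C c) q)"
    unfolding adj ..
  also have "\<dots> = level_weight lv C j q"
    unfolding level_weight_def p2 by (simp add: mult_ac)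
  finally show ?thesis by simp
qed

lemma level_weight_const:
  assumes "0 \<le> j" "j \<le> R"
  shows "level_weight lv C j q = level_weight lv C 0 q"
  using assms
proof (induction j rule: int_ge_induct)
  case (step i)
  then show ?case using level_weight_step[of "i + 1" q] by simp
qed simp

definition below :: "int \<Rightarrow> nat" where
  "below g = card {c\<in>C. lv c < g}"

lemma below_add_1: "below (g + 1) = below g + card {c\<in>C. lv c = g}"
proof -
  have "{c\<in>C. lv c < g + 1} = {c\<in>C. lv c < g} \<union> {c\<in>C. lv c = g}" by auto
  moreover have "card ({c\<in>C. lv c < g} \<union> {c\<in>C. lv c = g}) = card {c\<in>C. lv c < g} + card {c\<in>C. lv c = g}"
    using finite_C by (intro card_Un_disjoint) auto
  ultimately show ?thesis unfolding below_def by simp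
qed

lemma sum_qint_levels:
  assumes "0 \<le> i"
  shows "(\<Sum>g\<in>{0..i}. q ^ below g * qint (card {c\<in>C. lv c = g}) q) = qint (below (i + 1)) q"
  using assms
proof (induction i rule: int_ge_induct)
  case base
  have "{c\<in>C. lv c < 0} = {}" using level_range by force
  then have "below 0 = 0" unfolding below_def by (simp only: card.empty)
  then show ?case using below_add_1[of 0] by simp
next
  case (step i)
  have "{0..i + 1} = insert (i + 1) {0..i}" using step.hyps by auto
  then show ?case using step below_add_1[of "i + 1"] by (simp add: qint_add add_ac)
qed

lemma sum_shape_gf_levels:
  "(\<Sum>g\<in>{0..R}. q ^ below g * shape_gf lv g C q) = qint (card C) q * level_weight lv C 0 (q::'a::comm_ring_1)"
proof -
  have "(\<Sum>g\<in>{0..R}. q ^ below g * shape_gf lv g C q)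
      = (\<Sum>g\<in>{0..R}. q ^ below g * qint (card {x\<in>C. lv x = g}) q * level_weight lv C 0 q)"
  proof (rule sum.cong[OF refl])
    fix g assume "g \<in> {0..R}"
    then show "q ^ below g * shape_gf lv g C q = q ^ below g * qint (card {x\<in>C. lv x = g}) q * level_weight lv C 0 q"
      using shape_gf_eq_level_weight[of g q] level_weight_const[of g q] by simp
  qed
  also have "\<dots> = (\<Sum>g\<in>{0..R}. q ^ below g * qint (card {x\<in>C. lv x = g}) q) * level_weight lv C 0 q"
    by (simp add: sum_distrib_right)
  also have "(\<Sum>g\<in>{0..R}. q ^ below g * qint (card {x\<in>C. lv x = g}) q) = qint (card C) q"
  proof -
    have "below (R + 1) = card C"
      using level_range unfolding below_def by (intro arg_cong[where f = card]) force
    then show ?thesis using sum_qint_levels[OF R_nonneg] by simp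
  qed
  finally show ?thesis .
qed

end


section \<open>Reading order\<close>

fun pos :: "nat list \<Rightarrow> nat \<Rightarrow> nat" where
  "pos [] c = 0"
| "pos (x # xs) c = (if x = c then 0 else Suc (pos xs c))"

lemma pos_less: "c \<in> set xs \<Longrightarrow> pos xs c < length xs"
  by (induction xs) auto

lemma nth_pos: "c \<in> set xs \<Longrightarrow> xs ! pos xs c = c"
  by (induction xs) auto

lemma pos_nth: "distinct xs \<Longrightarrow> i < length xs \<Longrightarrow> pos xs (xs ! i) = i"
proof (induction xs arbitrary: i)
  case (Cons x xs)
  then show ?case by (cases i) (auto simp: nth_mem)
qed simp

lemma list_eq_by_pos:
  assumes "distinct L" "distinct L'" "set L = C" "set L' = C" "\<And>c. c \<in> C \<Longrightarrow> pos L c = pos L' c"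
  shows "L = L'"
proof (rule nth_equalityI)
  show len: "length L = length L'" using assms distinct_card by metis
  fix i assume i: "i < length L"
  let ?c = "L ! i"
  have c: "?c \<in> C" using i assms(3) by auto
  have "pos L ?c = i" using pos_nth[OF assms(1) i] .
  then have "pos L' ?c = i" using assms(5)[OF c] by simp
  then have "L' ! i = ?c" using nth_pos[of ?c L'] c assms(4) by simp
  then show "L ! i = L' ! i" by simp
qed

lemma card_key_less_eq_pos:
  fixes \<kappa> :: "nat \<Rightarrow> nat"
  assumes d: "distinct L" and s: "set L = C" and so: "sorted_wrt (<) (map \<kappa> L)" and c: "c \<in> C"
  shows "card {c'\<in>C. \<kappa> c' < \<kappa> c} = pos L c"
proof -
  let ?i = "pos L c"
  have ci: "L ! ?i = c" using nth_pos c s by blast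
  have il: "?i < length L" using pos_less c s by blast
  have lt: "\<kappa> (L ! j) < \<kappa> (L ! k)" if "j < k" "k < length L" for j k
    using sorted_wrt_nth_less[OF so, of j k] that by simp
  have eq: "{c'\<in>C. \<kappa> c' < \<kappa> c} = (\<lambda>j. L ! j) ` {..<?i}"
  proof (rule set_eqI, rule iffI)
    fix c' assume c': "c' \<in> {c'\<in>C. \<kappa> c' < \<kappa> c}"
    then have cC: "c' \<in> set L" using s by auto
    let ?j = "pos L c'"
    have "L ! ?j = c'" using nth_pos cC by blast
    moreover have jl: "?j < length L" using pos_less cC by blast
    moreover have "?j < ?i"
    proof (rule ccontr)
      assume "\<not> ?j < ?i"
      then have "?i \<le> ?j" by simp
      then have "\<kappa> (L ! ?i) \<le> \<kappa> (L ! ?j)" using lt[of ?i ?j] jl by (cases "?i = ?j") force+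
      then show False using c' ci \<open>L ! ?j = c'\<close> by simp
    qed
    ultimately show "c' \<in> (\<lambda>j. L ! j) ` {..<?i}" by (metis imageI lessThan_iff)
  next
    fix c' assume "c' \<in> (\<lambda>j. L ! j) ` {..<?i}"
    then obtain j where j: "j < ?i" "c' = L ! j" by auto
    then have "\<kappa> c' < \<kappa> c" using lt[of j ?i] il ci by simp
    moreover have "c' \<in> C" using j il s by auto
    ultimately show "c' \<in> {c'\<in>C. \<kappa> c' < \<kappa> c}" by simp
  qed
  have "inj_on (\<lambda>j. L ! j) {..<?i}" using d il by (auto simp: inj_on_def nth_eq_iff_index_eq)
  then show ?thesis unfolding eq by (simp add: card_image)
qed

text \<open>Sorting by this key lists the cars row by row: the cars preferring column \<open>j\<close> occupy the
  lowest free rows in increasing order.\<close>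

definition reading_key :: "nat \<Rightarrow> (nat \<Rightarrow> nat) \<Rightarrow> nat \<Rightarrow> nat" where
  "reading_key n f c = f c * (n + 1) + c"

lemma reading_key_less_iff:
  assumes "a \<le> n" "b \<le> n"
  shows "reading_key n f a < reading_key n f b \<longleftrightarrow> f a < f b \<or> (f a = f b \<and> a < b)"
proof -
  have lt: "reading_key n f x < reading_key n f y" if "f x < f y" "x \<le> n" for x y
  proof -
    have "Suc (f x) * (n + 1) \<le> f y * (n + 1)"
      using that by (intro mult_le_mono1) simp
    then show ?thesis using that(2) unfolding reading_key_def mult_Suc by linarith
  qed
  show ?thesis using lt[of a b] lt[of b a] assms
    by (cases "f a" "f b" rule: linorder_cases) (auto simp: reading_key_def)
qed

lemma inj_on_reading_key: "inj_on (reading_key n f) {1..n}"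
  by (rule inj_onI) (metis atLeastAtMost_iff less_irrefl linorder_neqE_nat reading_key_less_iff)

lemma row_eq_card_key:
  assumes "c \<in> {1..n}"
  shows "row n f c = card {c'\<in>{1..n}. reading_key n f c' < reading_key n f c}"
proof -
  have "{c'\<in>{1..n}. reading_key n f c' < reading_key n f c}
      = {c'\<in>{1..n}. f c' < f c} \<union> {c'\<in>{1..n}. f c' = f c \<and> c' < c}"
    using assms reading_key_less_iff[of _ n c f] by auto
  moreover have "card ({c'\<in>{1..n}. f c' < f c} \<union> {c'\<in>{1..n}. f c' = f c \<and> c' < c})
      = card {c'\<in>{1..n}. f c' < f c} + card {c'\<in>{1..n}. f c' = f c \<and> c' < c}"
    by (rule card_Un_disjoint) auto
  ultimately show ?thesis by (simp add: row_def)
qed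

lemma row_eq_pos:
  assumes "distinct L" "set L = {1..n}" "sorted_wrt (<) (map (reading_key n f) L)" "c \<in> {1..n}"
  shows "row n f c = pos L c"
  using row_eq_card_key[OF assms(4)] card_key_less_eq_pos[OF assms] by simp

definition reading_order :: "nat \<Rightarrow> (nat \<Rightarrow> nat) \<Rightarrow> nat list" where
  "reading_order n f = sort_key (reading_key n f) (sorted_list_of_set {1..n})"

lemma distinct_reading_order: "distinct (reading_order n f)"
  and set_reading_order: "set (reading_order n f) = {1..n}"
  and length_reading_order: "length (reading_order n f) = n"
  by (simp_all add: reading_order_def length_sort)

lemma sorted_reading_order: "sorted_wrt (<) (map (reading_key n f) (reading_order n f))"
proof -
  have "distinct (map (reading_key n f) (reading_order n f))"
    using inj_on_reading_key by (simp add: distinct_map distinct_reading_order set_reading_order)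
  then show ?thesis by (simp add: reading_order_def strict_sorted_iff sorted_sort_key)
qed

text \<open>The position in reading order is the row, so successive cars in reading order are
  admissible for \<open>diag n f\<close>.\<close>

lemma diag_eq_pos_reading_order:
  "c \<in> {1..n} \<Longrightarrow> diag n f c = int (pos (reading_order n f) c) - (int (f c) - 1)"
  using row_eq_pos[OF distinct_reading_order set_reading_order sorted_reading_order]
  by (simp add: diag_def)

lemma admissible_reading_order: "admissible (diag n f) (reading_order n f)"
  unfolding admissible_def successively_conv_nth
proof (intro allI impI)
  let ?L = "reading_order n f"
  fix i assume i: "Suc i < length ?L"
  let ?a = "?L ! i" and ?b = "?L ! Suc i"
  have ab: "?a \<in> {1..n}" "?b \<in> {1..n}"
    using i set_reading_order nth_mem[of i ?L] nth_mem[of "Suc i" ?L] by auto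
  have "reading_key n f ?a < reading_key n f ?b"
    using sorted_wrt_nth_less[OF sorted_reading_order, of i "Suc i"] i by simp
  then have "f ?a < f ?b \<or> (f ?a = f ?b \<and> ?a < ?b)" using reading_key_less_iff ab by auto
  moreover have "pos ?L ?a = i" "pos ?L ?b = Suc i"
    using pos_nth[OF distinct_reading_order] i by auto
  ultimately show "admissible_step (diag n f) ?a ?b"
    using diag_eq_pos_reading_order ab by (auto simp: admissible_step_def)
qed

lemma reading_order_bounds:
  assumes "f \<in> Pref n" "1 \<le> n"
  shows "diag n f (hd (reading_order n f)) \<le> 0" "0 \<le> diag n f (last (reading_order n f))"
    and "\<And>c. c \<in> {1..n} \<Longrightarrow> - int n \<le> diag n f c \<and> diag n f c \<le> int n"
proof -
  let ?L = "reading_order n f"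
  have fC: "\<And>c. c \<in> {1..n} \<Longrightarrow> f c \<in> {1..n}" using assms(1) by (auto simp: Pref_def)
  have ne: "?L \<noteq> []" using length_reading_order[of n f] assms(2) by auto
  have "hd ?L \<in> {1..n}" "last ?L \<in> {1..n}" using ne set_reading_order by (metis hd_in_set last_in_set)+
  moreover have "pos ?L (hd ?L) = 0" "pos ?L (last ?L) = n - 1"
    using pos_nth[OF distinct_reading_order, of 0] pos_nth[OF distinct_reading_order, of "n - 1"]
      ne length_reading_order[of n f] assms(2) by (auto simp: hd_conv_nth last_conv_nth)
  ultimately show "diag n f (hd ?L) \<le> 0" "0 \<le> diag n f (last ?L)"
    using diag_eq_pos_reading_order fC assms(2) by force+
  fix c assume c: "c \<in> {1..n}"
  have "pos ?L c < n" using pos_less[of c ?L] c set_reading_order length_reading_order by metis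
  then show "- int n \<le> diag n f c \<and> diag n f c \<le> int n"
    using diag_eq_pos_reading_order[OF c] fC[OF c] by auto
qed

lemma dinv_pairs_eq_card:
  "distinct L \<Longrightarrow> dinv_pairs lv L = card {(a,b). a \<in> set L \<and> b \<in> set L \<and> pos L a < pos L b \<and> dinv_pair lv a b}"
proof (induction L)
  case (Cons x xs)
  have xn: "x \<notin> set xs" and dx: "distinct xs" using Cons.prems by auto
  let ?S1 = "Pair x ` {b\<in>set xs. dinv_pair lv x b}"
  let ?S2 = "{(a,b). a \<in> set xs \<and> b \<in> set xs \<and> pos xs a < pos xs b \<and> dinv_pair lv a b}"
  have "{(a,b). a \<in> set (x#xs) \<and> b \<in> set (x#xs) \<and> pos (x#xs) a < pos (x#xs) b \<and> dinv_pair lv a b}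
      = ?S1 \<union> ?S2"
    using xn by (auto simp: split: if_splits)
  moreover have "card (?S1 \<union> ?S2) = card ?S1 + card ?S2"
    using xn by (intro card_Un_disjoint) (auto intro: finite_subset[of _ "set xs \<times> set xs"])
  moreover have "card ?S1 = length (filter (dinv_pair lv x) xs)"
    using distinct_length_filter[OF dx, of "dinv_pair lv x"]
    by (simp add: card_image inj_on_def Int_def conj_commute)
  ultimately show ?case using Cons.IH[OF dx] by simp
qed simp


section \<open>The preference function of a shape\<close>

text \<open>Car \<open>L ! i\<close> is placed in row \<open>i\<close>, in the column that puts it on diagonal \<open>lv c - g\<close>; off the
  cars the value is \<open>undefined\<close>, as for the extensional functions in \<open>Pref\<close>.\<close>

definition pref_of_shape :: "nat \<Rightarrow> (nat \<Rightarrow> int) \<Rightarrow> int \<Rightarrow> nat list \<Rightarrow> (nat \<Rightarrow> nat)" where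
  "pref_of_shape n lv g L = (\<lambda>c. if c \<in> {1..n} then nat (int (pos L c) + 1 - lv c + g) else undefined)"

locale shape_pref =
  fixes n :: nat and lv :: "nat \<Rightarrow> int" and g :: int and L :: "nat list"
  assumes shape: "L \<in> shapes lv {1..n}" and straddles: "straddles lv g L" and n_pos: "1 \<le> n"
begin

abbreviation "f \<equiv> pref_of_shape n lv g L"

lemma distinct_L: "distinct L" and set_L: "set L = {1..n}" and admissible_L: "admissible lv L"
  using shape by (auto simp: shapes_def)

lemma length_L: "length L = n"
  using distinct_card[OF distinct_L] set_L by simp

definition column :: "nat \<Rightarrow> int" where
  "column i = int i - lv (L ! i) + g"

lemma column_step: "Suc i < n \<Longrightarrow> column i \<le> column (Suc i) \<and> (column i = column (Suc i) \<longrightarrow> L ! i < L ! Suc i)"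
  using successively_nth[OF admissible_L[unfolded admissible_def], of i] length_L
  by (auto simp: admissible_step_def column_def)

lemma column_mono: "i \<le> j \<Longrightarrow> j < n \<Longrightarrow> column i \<le> column j"
proof (induction j)
  case (Suc j)
  then show ?case using column_step[of j] by (cases "i = Suc j") force+
qed simp

lemma column_range: "i < n \<Longrightarrow> 0 \<le> column i \<and> column i \<le> int n - 1"
proof -
  assume i: "i < n"
  have ne: "L \<noteq> []" using length_L n_pos by auto
  have "column 0 = - lv (hd L) + g" using ne by (simp add: column_def hd_conv_nth)
  moreover have "column (n - 1) = int n - 1 - lv (last L) + g"
    using ne length_L n_pos by (simp add: column_def last_conv_nth of_nat_diff)
  ultimately show ?thesis
    using column_mono[of 0 i] column_mono[of i "n - 1"] i straddles by (force simp: straddles_def)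
qed

lemma pref_eq_column: "c \<in> {1..n} \<Longrightarrow> int (f c) = column (pos L c) + 1"
proof -
  assume c: "c \<in> {1..n}"
  have "pos L c < n" using pos_less[of c L] c set_L length_L by simp
  then have "0 \<le> column (pos L c)" using column_range by simp
  moreover have "column (pos L c) = int (pos L c) - lv c + g"
    using nth_pos[of c L] c set_L by (simp add: column_def)
  ultimately show ?thesis using c by (simp add: pref_of_shape_def)
qed

lemma pref_of_shape_in_Pref: "f \<in> Pref n"
proof -
  have "f c \<in> {1..n}" if c: "c \<in> {1..n}" for c
    using pref_eq_column[OF c] column_range[of "pos L c"] pos_less[of c L] c set_L length_L by auto
  then show ?thesis by (auto simp: Pref_def PiE_def Pi_def extensional_def pref_of_shape_def)
qed

lemma sorted_reading_key: "sorted_wrt (<) (map (reading_key n f) L)"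
proof -
  have "successively (<) (map (reading_key n f) L)"
    unfolding successively_conv_nth
  proof (intro allI impI)
    fix i assume "Suc i < length (map (reading_key n f) L)"
    then have i: "Suc i < n" using length_L by simp
    have a: "L ! i \<in> {1..n}" "L ! Suc i \<in> {1..n}" using i length_L set_L nth_mem by (metis Suc_lessD)+
    have "pos L (L ! i) = i" "pos L (L ! Suc i) = Suc i" using pos_nth[OF distinct_L] i length_L by auto
    then have "int (f (L ! i)) = column i + 1" "int (f (L ! Suc i)) = column (Suc i) + 1"
      using pref_eq_column a by auto
    then have "f (L ! i) < f (L ! Suc i) \<or> (f (L ! i) = f (L ! Suc i) \<and> L ! i < L ! Suc i)"
      using column_step[OF i] by (cases "column i = column (Suc i)") auto
    then show "map (reading_key n f) L ! i < map (reading_key n f) L ! Suc i"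
      using a i length_L reading_key_less_iff by auto
  qed
  then show ?thesis by (simp add: successively_conv_sorted_wrt transp_def)
qed

lemma row_pref: "c \<in> {1..n} \<Longrightarrow> row n f c = pos L c"
  by (rule row_eq_pos[OF distinct_L set_L sorted_reading_key])

lemma diag_pref: "c \<in> {1..n} \<Longrightarrow> diag n f c = lv c - g"
  using row_pref[of c] pref_eq_column[of c] nth_pos[of c L] set_L by (simp add: diag_def column_def)

lemma pref_less_iff:
  assumes "a \<in> {1..n}" "b \<in> {1..n}" "a \<noteq> b" "lv a = lv b \<or> lv a = lv b + 1"
  shows "f a < f b \<longleftrightarrow> pos L a < pos L b"
proof -
  have "pos L a \<noteq> pos L b" using assms(1-3) nth_pos set_L by metis
  moreover have "int (f a) - int (f b) = int (pos L a) - int (pos L b) - (lv a - lv b)"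
    using pref_eq_column[OF assms(1)] pref_eq_column[OF assms(2)] nth_pos assms(1,2) set_L
    by (simp add: column_def)
  ultimately show ?thesis using assms(4) by auto
qed

lemma dinv_pref: "dinv n f = dinv_pairs lv L + card {c\<in>{1..n}. lv c < g}"
proof -
  let ?C = "{1..n}"
  let ?S1 = "{(a, b). a \<in> ?C \<and> b \<in> ?C \<and> diag n f a = diag n f b \<and> f a < f b \<and> a < b}"
  let ?S2 = "{(a, b). a \<in> ?C \<and> b \<in> ?C \<and> b < a \<and> diag n f a = diag n f b + 1 \<and> f a < f b}"
  have "?S1 \<union> ?S2 = {(a,b). a \<in> set L \<and> b \<in> set L \<and> pos L a < pos L b \<and> dinv_pair lv a b}"
    using set_L diag_pref pref_less_iff by (auto simp: dinv_pair_def)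
  moreover have "card (?S1 \<union> ?S2) = card ?S1 + card ?S2"
    by (rule card_Un_disjoint) (auto intro: finite_subset[of _ "?C \<times> ?C"])
  moreover have "{c \<in> ?C. diag n f c < 0} = {c\<in>?C. lv c < g}" using diag_pref by auto
  ultimately show ?thesis using dinv_pairs_eq_card[OF distinct_L, of lv] by (simp add: dinv_def)
qed

lemma deviation_pref:
  assumes "\<And>c. c \<in> {1..n} \<Longrightarrow> 0 \<le> lv c" "\<exists>c\<in>{1..n}. lv c = 0"
  shows "deviation n f = g"
proof -
  have "(\<lambda>c. - diag n f c) ` {1..n} = (\<lambda>c. g - lv c) ` {1..n}" using diag_pref by auto
  moreover have "Max ((\<lambda>c. g - lv c) ` {1..n}) = g"
    using assms by (intro Max_eqI) force+
  ultimately show ?thesis unfolding deviation_def by simp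
qed

lemma area_pref:
  assumes "\<And>c. c \<in> {1..n} \<Longrightarrow> 0 \<le> lv c" "\<exists>c\<in>{1..n}. lv c = 0"
  shows "area n f = nat (\<Sum>c\<in>{1..n}. lv c)"
proof -
  have "(\<Sum>c\<in>{1..n}. diag n f c + deviation n f) = (\<Sum>c\<in>{1..n}. lv c)"
    using deviation_pref[OF assms] by (intro sum.cong[OF refl]) (simp add: diag_pref)
  then show ?thesis unfolding area_def by simp
qed

end


section \<open>Diagonal words\<close>

definition diag_before :: "(nat \<Rightarrow> int) \<Rightarrow> nat \<Rightarrow> nat \<Rightarrow> bool" where
  "diag_before D a b \<longleftrightarrow> D b < D a \<or> (D a = D b \<and> a < b)"

lemma diag_before_iff_less: "diag_before D a b \<longleftrightarrow> (- D a, a) < (- D b, b)"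
  by (auto simp: diag_before_def)

lemma sorted_diag_before_unique:
  assumes "sorted_wrt (diag_before D) xs" "sorted_wrt (diag_before D) ys" "set xs = set ys"
  shows "xs = ys"
proof -
  let ?k = "\<lambda>c. (- D c, c)"
  have "sorted_wrt (<) (map ?k zs)" if "sorted_wrt (diag_before D) zs" for zs
    unfolding sorted_wrt_map using that by (rule sorted_wrt_mono_rel[rotated]) (simp add: diag_before_iff_less)
  then have "map ?k xs = map ?k ys" using assms by (intro strict_sorted_equal) auto
  moreover have "inj ?k" by (auto simp: inj_def)
  ultimately show ?thesis by (simp add: inj_map_eq_map)
qed

lemma sorted_concat_level_classes:
  assumes "finite S" "sorted_wrt (>) ds"
  shows "sorted_wrt (diag_before D) (concat (map (\<lambda>d. sorted_list_of_set {c\<in>S. D c = d}) ds))"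
  using assms(2)
proof (induction ds)
  case (Cons d ds)
  have "sorted_wrt (<) (sorted_list_of_set {c\<in>S. D c = d})" by simp
  then have "sorted_wrt (diag_before D) (sorted_list_of_set {c\<in>S. D c = d})"
    by (rule sorted_wrt_mono_rel[rotated]) (use assms(1) in \<open>auto simp: diag_before_def\<close>)
  moreover have "diag_before D x y"
    if "x \<in> set (sorted_list_of_set {c\<in>S. D c = d})"
      and "y \<in> set (concat (map (\<lambda>d. sorted_list_of_set {c\<in>S. D c = d}) ds))" for x y
  proof -
    have "D x = d" "D y \<in> set ds" using that assms(1) by auto
    then show ?thesis using Cons.prems by (auto simp: diag_before_def)
  qed
  ultimately show ?case using Cons by (simp add: sorted_wrt_append)
qed simp

lemma set_concat_level_classes:
  "finite S \<Longrightarrow> set (concat (map (\<lambda>d. sorted_list_of_set {c\<in>S. D c = d}) ds)) = {c\<in>S. D c \<in> set ds}"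
  by auto

lemma sorted_diagword: "sorted_wrt (diag_before (diag n f)) (diagword n f)"
  unfolding diagword_def
  by (rule sorted_concat_level_classes) (simp_all add: sorted_wrt_rev sorted_wrt_upto)

lemma diagword_eqI:
  assumes "sorted_wrt (diag_before (diag n f)) zs" "set zs = {1..n}"
    and "\<And>c. c \<in> {1..n} \<Longrightarrow> - int n \<le> diag n f c \<and> diag n f c \<le> int n"
  shows "diagword n f = zs"
proof (rule sorted_diag_before_unique[OF sorted_diagword assms(1)])
  show "set (diagword n f) = set zs"
    using assms(2,3) unfolding diagword_def by (auto simp: set_concat_level_classes)
qed


section \<open>Runs of a permutation\<close>

locale perm_word =
  fixes n :: nat and \<tau> :: "nat list"
  assumes n_pos: "1 \<le> n" and length_\<tau>: "length \<tau> = n" and distinct_\<tau>: "distinct \<tau>"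
    and set_\<tau>: "set \<tau> = {1..n}"
begin

abbreviation "run \<equiv> run_index \<tau>"

definition descent :: "nat \<Rightarrow> nat" where
  "descent i = (if \<tau> ! Suc i < \<tau> ! i then 1 else 0)"

definition max_run :: nat where
  "max_run = run (n - 1)"

text \<open>These will be
  the diagonals, up to a common shift, of every preference function with diagonal word \<open>\<tau>\<close>.\<close>

definition level :: "nat \<Rightarrow> int" where
  "level c = int max_run - int (run (pos \<tau> c))"

lemma finite_descents_before: "finite {i. i + 1 \<le> p \<and> \<tau> ! i > \<tau> ! (i + 1)}"
  by (rule finite_subset[of _ "{..<p}"]) auto

lemma run_0: "run 0 = 0" by (simp add: run_index_def)

lemma run_Suc: "run (Suc p) = run p + descent p"
proof -
  have e: "{i. i + 1 \<le> Suc p \<and> \<tau> ! i > \<tau> ! (i + 1)} = {i. i + 1 \<le> p \<and> \<tau> ! i > \<tau> ! (i + 1)} \<union> {i. i = p \<and> \<tau> ! i > \<tau> ! (i + 1)}"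
    by auto
  have "card ({i. i + 1 \<le> p \<and> \<tau> ! i > \<tau> ! (i + 1)} \<union> {i. i = p \<and> \<tau> ! i > \<tau> ! (i + 1)})
      = card {i. i + 1 \<le> p \<and> \<tau> ! i > \<tau> ! (i + 1)} + card {i. i = p \<and> \<tau> ! i > \<tau> ! (i + 1)}"
    by (rule card_Un_disjoint) (use finite_descents_before in auto)
  moreover have "card {i. i = p \<and> \<tau> ! i > \<tau> ! (i + 1)} = descent p"
  proof -
    have "{i. i = p \<and> \<tau> ! i > \<tau> ! (i + 1)} = (if \<tau> ! Suc p < \<tau> ! p then {p} else {})" by auto
    then show ?thesis by (simp add: descent_def)
  qed
  ultimately show ?thesis unfolding run_index_def e by simp
qed

lemma run_eq_sum: "run p = (\<Sum>i<p. descent i)"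
  by (induction p) (simp_all add: run_0 run_Suc)

lemma run_mono: "p \<le> p' \<Longrightarrow> run p \<le> run p'"
  by (induction p' ) (auto simp: run_Suc le_Suc_eq)

lemma run_eq_imp_le: "i \<le> j \<Longrightarrow> j < n \<Longrightarrow> run i = run j \<Longrightarrow> \<tau> ! i \<le> \<tau> ! j"
proof (induction j)
  case 0
  then show ?case by simp
next
  case (Suc j)
  show ?case
  proof (cases "i = Suc j")
    case False
    then have ij: "i \<le> j" using Suc.prems by simp
    have "run i \<le> run j" "run j \<le> run (Suc j)" using run_mono ij by auto
    then have rj: "run j = run i" "descent j = 0" using Suc.prems run_Suc[of j] by auto
    then have "\<tau> ! i \<le> \<tau> ! j" using Suc.IH[OF ij] Suc.prems by simp
    moreover have "\<tau> ! j \<le> \<tau> ! Suc j" using rj(2) by (auto simp: descent_def split: if_splits)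
    ultimately show ?thesis by simp
  qed simp
qed

lemma level_nth: "p < n \<Longrightarrow> level (\<tau> ! p) = int max_run - int (run p)"
  using pos_nth[OF distinct_\<tau>, of p] length_\<tau> by (simp add: level_def)

lemma run_le_max_run: "p < n \<Longrightarrow> run p \<le> max_run"
  unfolding max_run_def by (rule run_mono) simp

lemma cars_eq_image: "{1..n} = (\<lambda>p. \<tau> ! p) ` {..<n}"
  using set_\<tau> length_\<tau> by (auto simp: set_conv_nth)

lemma inj_on_nth: "inj_on (\<lambda>p. \<tau> ! p) {..<n}"
  using distinct_\<tau> length_\<tau> by (auto simp: inj_on_def nth_eq_iff_index_eq)

lemma car_eq_nth: "c \<in> {1..n} \<Longrightarrow> \<exists>p<n. c = \<tau> ! p"
  using cars_eq_image by auto

lemma level_range: "c \<in> {1..n} \<Longrightarrow> 0 \<le> level c \<and> level c \<le> int max_run"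
  using car_eq_nth level_nth run_le_max_run by fastforce

lemma run_surj: "v \<le> run p \<Longrightarrow> \<exists>p'\<le>p. run p' = v"
proof (induction p arbitrary: v)
  case 0
  then show ?case by (simp add: run_0)
next
  case (Suc p)
  show ?case
  proof (cases "v \<le> run p")
    case True
    then show ?thesis using Suc.IH by (meson le_Suc_eq)
  next
    case False
    then have "v = run (Suc p)" using Suc.prems run_Suc[of p] by (auto simp: descent_def split: if_splits)
    then show ?thesis by blast
  qed
qed

lemma level_surj: "0 \<le> j \<Longrightarrow> j \<le> int max_run \<Longrightarrow> \<exists>c\<in>{1..n}. level c = j"
proof -
  assume j: "0 \<le> j" "j \<le> int max_run"
  then obtain p where p: "p \<le> n - 1" "run p = max_run - nat j" using run_surj[of "max_run - nat j" "n-1"] by (auto simp: max_run_def)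
  have pn: "p < n" using p n_pos by simp
  have "level (\<tau> ! p) = j" using level_nth[OF pn] p j by simp
  moreover have "\<tau> ! p \<in> {1..n}" using pn length_\<tau> set_\<tau> nth_mem by blast
  ultimately show ?thesis by blast
qed

lemma sorted_diag_before_level: "sorted_wrt (diag_before level) \<tau>"
  unfolding sorted_wrt_iff_nth_less
proof (intro allI impI)
  fix i j assume ij: "i < j" "j < length \<tau>"
  then have jn: "j < n" and iN: "i < n" using length_\<tau> by auto
  have m: "run i \<le> run j" using run_mono ij by simp
  have "level (\<tau> ! j) \<le> level (\<tau> ! i)" using m level_nth[OF jn] level_nth[OF iN] by simp
  moreover have "\<tau> ! i < \<tau> ! j" if "level (\<tau> ! i) = level (\<tau> ! j)"
  proof -
    have "run i = run j" using that level_nth[OF jn] level_nth[OF iN] by simp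
    then have "\<tau> ! i \<le> \<tau> ! j" using run_eq_imp_le ij jn by simp
    moreover have "\<tau> ! i \<noteq> \<tau> ! j" using distinct_\<tau> ij length_\<tau> by (simp add: nth_eq_iff_index_eq)
    ultimately show ?thesis by simp
  qed
  ultimately show "diag_before level (\<tau> ! i) (\<tau> ! j)" by (auto simp: diag_before_def)
qed

lemma level_last: "level (\<tau> ! (n - 1)) = 0"
  using level_nth[of "n-1"] n_pos by (simp add: max_run_def)

lemma level_step: "Suc p < n \<Longrightarrow> level (\<tau> ! p) = level (\<tau> ! Suc p) + int (descent p)"
  using level_nth[of p] level_nth[of "Suc p"] run_Suc[of p] by simp

lemma sum_diff_partial_sums:
  fixes d :: "nat \<Rightarrow> nat"
  shows "(\<Sum>p<Suc m. int (\<Sum>i<m. d i) - int (\<Sum>i<p. d i)) = int (\<Sum>i<m. (i+1) * d i)"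
proof (induction m)
  case 0
  then show ?case by simp
next
  case (Suc m)
  have "(\<Sum>p<Suc (Suc m). int (\<Sum>i<Suc m. d i) - int (\<Sum>i<p. d i))
      = (\<Sum>p<Suc m. int (\<Sum>i<Suc m. d i) - int (\<Sum>i<p. d i)) + (int (\<Sum>i<Suc m. d i) - int (\<Sum>i<Suc m. d i))"
    by (simp only: sum.lessThan_Suc)
  also have "(\<Sum>p<Suc m. int (\<Sum>i<Suc m. d i) - int (\<Sum>i<p. d i))
      = (\<Sum>p<Suc m. int (d m) + (int (\<Sum>i<m. d i) - int (\<Sum>i<p. d i)))"
    by (rule sum.cong) auto
  also have "\<dots> = (\<Sum>p<Suc m. int (d m)) + (\<Sum>p<Suc m. int (\<Sum>i<m. d i) - int (\<Sum>i<p. d i))"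
    by (rule sum.distrib)
  finally show ?case using Suc by (simp add: algebra_simps)
qed

lemma maj_eq_sum_descent: "maj \<tau> = (\<Sum>i<n - 1. (i + 1) * descent i)"
proof -
  have e: "{i. 1 \<le> i \<and> i < length \<tau> \<and> \<tau> ! (i - 1) > \<tau> ! i} = Suc ` {i \<in> {..<n - 1}. \<tau> ! Suc i < \<tau> ! i}"
  proof (rule set_eqI, rule iffI)
    fix i assume "i \<in> {i. 1 \<le> i \<and> i < length \<tau> \<and> \<tau> ! (i - 1) > \<tau> ! i}"
    then have i: "1 \<le> i" "i < n" "\<tau> ! (i - 1) > \<tau> ! i" using length_\<tau> by auto
    then have "i = Suc (i - 1)" "i - 1 \<in> {i \<in> {..<n - 1}. \<tau> ! Suc i < \<tau> ! i}" by auto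
    then show "i \<in> Suc ` {i \<in> {..<n - 1}. \<tau> ! Suc i < \<tau> ! i}" by (rule image_eqI)
  qed (use length_\<tau> in auto)
  have "maj \<tau> = (\<Sum>i\<in>{i \<in> {..<n - 1}. \<tau> ! Suc i < \<tau> ! i}. Suc i)"
    unfolding maj_def e by (subst sum.reindex) auto
  also have "\<dots> = (\<Sum>i<n - 1. if \<tau> ! Suc i < \<tau> ! i then Suc i else 0)" by (rule sum.inter_filter) simp
  also have "\<dots> = (\<Sum>i<n - 1. (i + 1) * descent i)" by (rule sum.cong) (auto simp: descent_def)
  finally show ?thesis .
qed

lemma sum_level_eq_maj: "(\<Sum>c\<in>{1..n}. level c) = int (maj \<tau>)"
proof -
  have max_run: "max_run = (\<Sum>i<n - 1. descent i)" unfolding max_run_def by (rule run_eq_sum)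
  have "(\<Sum>c\<in>{1..n}. level c) = (\<Sum>p<n. level (\<tau> ! p))"
    unfolding cars_eq_image by (rule sum.reindex[OF inj_on_nth, unfolded comp_def])
  also have "\<dots> = (\<Sum>p<n. int (\<Sum>i<n - 1. descent i) - int (\<Sum>i<p. descent i))"
    by (rule sum.cong) (simp_all add: level_nth max_run run_eq_sum)
  also have "{..<n} = {..<Suc (n - 1)}" using n_pos by simp
  also have "(\<Sum>p<Suc (n - 1). int (\<Sum>i<n - 1. descent i) - int (\<Sum>i<p. descent i))
      = int (\<Sum>i<n - 1. (i + 1) * descent i)" by (rule sum_diff_partial_sums)
  finally show ?thesis using maj_eq_sum_descent by simp
qed

abbreviation "last_len \<equiv> last_run_len \<tau>"

lemma last_run_positions: "{p. p < n \<and> run p = max_run} = {n - last_len..<n}"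
proof -
  let ?P = "{p. p < n \<and> run p = max_run}"
  have fin: "finite ?P" by simp
  have ne: "n - 1 \<in> ?P" using n_pos by (simp add: max_run_def)
  define m0 where "m0 = Min ?P"
  have m0P: "m0 \<in> ?P" using fin ne unfolding m0_def by (metis Min_in empty_iff)
  have up: "p' \<in> ?P" if "p \<in> ?P" "p \<le> p'" "p' < n" for p p'
    using that run_mono[of p p'] run_le_max_run[of p'] by auto
  have eqm: "?P = {m0..<n}"
  proof (rule set_eqI, rule iffI)
    fix p assume "p \<in> ?P" then show "p \<in> {m0..<n}" using fin unfolding m0_def by auto
  next
    fix p assume "p \<in> {m0..<n}" then show "p \<in> ?P" using up[OF m0P] by auto
  qed
  have "last_len = card ?P" unfolding last_run_len_def using length_\<tau> by (simp add: max_run_def)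
  then have "last_len = n - m0" using eqm by simp
  moreover have "m0 < n" using m0P by simp
  ultimately have "m0 = n - last_len" by simp
  then show ?thesis using eqm by simp
qed

lemma last_run_le: "last_len \<le> n" and last_run_pos: "1 \<le> last_len"
proof -
  have "n - 1 \<in> {p. p < n \<and> run p = max_run}" using n_pos by (simp add: max_run_def)
  then have "n - 1 \<in> {n - last_len..<n}" using last_run_positions by simp
  then show "1 \<le> last_len" using n_pos by auto
  have "last_len = card {p. p < n \<and> run p = max_run}" unfolding last_run_len_def using length_\<tau> by (simp add: max_run_def)
  also have "\<dots> \<le> card {..<n}" by (rule card_mono) auto
  finally show "last_len \<le> n" by simp
qed

lemma level_pos_iff: "p < n \<Longrightarrow> (0 < level (\<tau> ! p) \<longleftrightarrow> p < n - last_len)"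
proof -
  assume p: "p < n"
  have "run p = max_run \<longleftrightarrow> p \<in> {n - last_len..<n}" using last_run_positions p by blast
  then show ?thesis using level_nth[OF p] run_le_max_run[OF p] p by auto
qed

lemma card_positions: "card {p'. p' < n \<and> P (\<tau> ! p')} = card {x\<in>{1..n}. P x}"
proof -
  have "{x\<in>{1..n}. P x} = (\<lambda>p. \<tau> ! p) ` {p'. p' < n \<and> P (\<tau> ! p')}" using cars_eq_image by auto
  moreover have "inj_on (\<lambda>p. \<tau> ! p) {p'. p' < n \<and> P (\<tau> ! p')}" using inj_on_nth by (rule inj_on_subset) auto
  ultimately show ?thesis by (simp add: card_image)
qed

lemma last_run_len_eq_card_level_0: "last_len = card {x\<in>{1..n}. level x = 0}"
proof -
  have "last_len = card {p. p < n \<and> run p = max_run}" unfolding last_run_len_def using length_\<tau> by (simp add: max_run_def)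
  also have "{p. p < n \<and> run p = max_run} = {p. p < n \<and> level (\<tau> ! p) = 0}"
    using level_nth run_le_max_run by force
  also have "card \<dots> = card {x\<in>{1..n}. level x = 0}" by (rule card_positions)
  finally show ?thesis .
qed

lemma schedule_eq_top_weight: "last_len < i \<Longrightarrow> i \<le> n \<Longrightarrow> schedule \<tau> i = top_weight level {1..n} (\<tau> ! (n - i))"
proof -
  assume i: "last_len < i" "i \<le> n"
  let ?p = "n - i"
  have p: "?p < n" using i last_run_pos by simp
  have a: "{p'. p' < n \<and> run p' = run ?p \<and> \<tau> ! p' > \<tau> ! ?p} = {p'. p' < n \<and> (\<lambda>x. level x = level (\<tau> ! ?p) \<and> \<tau> ! ?p < x) (\<tau> ! p')}"
    using level_nth p by auto
  have b: "{p'. p' < n \<and> run p' = run ?p + 1 \<and> \<tau> ! p' < \<tau> ! ?p} = {p'. p' < n \<and> (\<lambda>x. level x + 1 = level (\<tau> ! ?p) \<and> x < \<tau> ! ?p) (\<tau> ! p')}"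
    using level_nth p by auto
  have "schedule \<tau> i = card {p'. p' < n \<and> run p' = run ?p \<and> \<tau> ! p' > \<tau> ! ?p} + card {p'. p' < n \<and> run p' = run ?p + 1 \<and> \<tau> ! p' < \<tau> ! ?p}"
    unfolding schedule_def using i length_\<tau> by (simp add: Let_def)
  also have "\<dots> = card {x\<in>{1..n}. level x = level (\<tau> ! ?p) \<and> \<tau> ! ?p < x} + card {x\<in>{1..n}. level x + 1 = level (\<tau> ! ?p) \<and> x < \<tau> ! ?p}"
    unfolding a b using card_positions[of "\<lambda>x. level x = level (\<tau> ! ?p) \<and> \<tau> ! ?p < x"]
      card_positions[of "\<lambda>x. level x + 1 = level (\<tau> ! ?p) \<and> x < \<tau> ! ?p"] by simp
  also have "\<dots> = top_weight level {1..n} (\<tau> ! ?p)" by (simp add: top_weight_def)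
  finally show ?thesis .
qed

lemma bij_betw_top_positions:
  "bij_betw (\<lambda>i. \<tau> ! (n - i)) {last_len+1..n} {x\<in>{1..n}. 0 < level x}"
proof (rule bij_betwI')
  fix i i' assume i: "i \<in> {last_len+1..n}" and i': "i' \<in> {last_len+1..n}"
  have "n - i < length \<tau>" "n - i' < length \<tau>" using length_\<tau> last_run_pos i i' by auto
  then have "\<tau> ! (n - i) = \<tau> ! (n - i') \<longleftrightarrow> n - i = n - i'" using distinct_\<tau> by (simp add: nth_eq_iff_index_eq)
  then show "\<tau> ! (n - i) = \<tau> ! (n - i') \<longleftrightarrow> i = i'" using i i' by auto
next
  fix i assume i: "i \<in> {last_len+1..n}"
  then have p: "n - i < n" "n - i < n - last_len" using last_run_pos by auto
  then have "0 < level (\<tau> ! (n - i))" using level_pos_iff by simp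
  moreover have "\<tau> ! (n - i) \<in> {1..n}" using p set_\<tau> length_\<tau> nth_mem by blast
  ultimately show "\<tau> ! (n - i) \<in> {x\<in>{1..n}. 0 < level x}" by simp
next
  fix x assume x: "x \<in> {x\<in>{1..n}. 0 < level x}"
  then obtain p where p: "p < n" "x = \<tau> ! p" using car_eq_nth by blast
  then have "p < n - last_len" using level_pos_iff x by auto
  then have "n - p \<in> {last_len+1..n}" "x = \<tau> ! (n - (n - p))" using p by auto
  then show "\<exists>i\<in>{last_len+1..n}. x = \<tau> ! (n - i)" by blast
qed

lemma prod_schedule:
  "(\<Prod>i=1..n. qint (schedule \<tau> i) q)
     = qfact last_len q * (\<Prod>c\<in>{x\<in>{1..n}. 0 < level x}. qint (top_weight level {1..n} c) (q::'a::comm_ring_1))"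
proof -
  have sp: "{1..n} = {1..last_len} \<union> {last_len+1..n}" using last_run_le by auto
  have "(\<Prod>i=1..n. qint (schedule \<tau> i) q)
      = (\<Prod>i\<in>{1..last_len}. qint (schedule \<tau> i) q) * (\<Prod>i\<in>{last_len+1..n}. qint (schedule \<tau> i) q)"
    unfolding sp by (rule prod.union_disjoint) auto
  also have "(\<Prod>i\<in>{1..last_len}. qint (schedule \<tau> i) q) = qfact last_len q"
    unfolding qfact_def by (rule prod.cong) (auto simp: schedule_def)
  also have "(\<Prod>i\<in>{last_len+1..n}. qint (schedule \<tau> i) q)
      = (\<Prod>i\<in>{last_len+1..n}. qint (top_weight level {1..n} (\<tau> ! (n - i))) q)"
    by (rule prod.cong) (auto simp: schedule_eq_top_weight)
  also have "\<dots> = (\<Prod>c\<in>{x\<in>{1..n}. 0 < level x}. qint (top_weight level {1..n} c) q)"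
    by (rule prod.reindex_bij_betw[OF bij_betw_top_positions])
  finally show ?thesis .
qed

end

section \<open>Every preference function with diagonal word \<open>\<tau>\<close> comes from a shape\<close>

text \<open>An admissible walk cannot jump over a gap of more than one level, and it can only climb
  a gap of exactly one level from a smaller to a larger car.\<close>

lemma admissible_crossing:
  assumes adm: "admissible D L" and ne: "L \<noteq> []" and hd_last: "D (hd L) \<le> D (last L)"
    and gap: "\<And>c. c \<in> set L \<Longrightarrow> D c \<le> lo \<or> hi \<le> D c" and lo_hi: "lo < hi"
    and x: "x \<in> set L" "D x \<le> lo" and y: "y \<in> set L" "hi \<le> D y"
  obtains x' y' where "x' \<in> set L" "y' \<in> set L" "D x' = lo" "D y' = hi" "hi = lo + 1" "x' < y'"
proof -
  have "\<exists>i. Suc i < length L \<and> D (L ! i) \<le> lo \<and> hi \<le> D (L ! Suc i)"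
  proof (rule ccontr)
    assume no: "\<not> ?thesis"
    have low: "D (L ! k) \<le> lo" if "j \<le> k" "k < length L" "D (L ! j) \<le> lo" for j k
      using that
    proof (induction k)
      case (Suc k)
      then show ?case using no gap[of "L ! Suc k"] nth_mem[OF Suc.prems(2)] by (cases "j = Suc k") force+
    qed simp
    obtain jx where "jx < length L" "L ! jx = x" using x(1) by (auto simp: in_set_conv_nth)
    then have "D (last L) \<le> lo" using low[of jx "length L - 1"] x(2) ne by (simp add: last_conv_nth)
    moreover obtain jy where "jy < length L" "L ! jy = y" using y(1) by (auto simp: in_set_conv_nth)
    then have "\<not> D (hd L) \<le> lo" using low[of 0 jy] y(2) lo_hi ne by (auto simp: hd_conv_nth)
    then have "hi \<le> D (hd L)" using gap[of "hd L"] ne by auto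
    ultimately show False using hd_last lo_hi by simp
  qed
  then obtain i where i: "Suc i < length L" "D (L ! i) \<le> lo" "hi \<le> D (L ! Suc i)" by blast
  have "admissible_step D (L ! i) (L ! Suc i)" using successively_nth[OF adm[unfolded admissible_def] i(1)] .
  then have "D (L ! i) = lo" "D (L ! Suc i) = hi" "hi = lo + 1" "L ! i < L ! Suc i"
    using i lo_hi by (auto simp: admissible_step_def)
  moreover have "L ! i \<in> set L" "L ! Suc i \<in> set L" using i(1) by simp_all
  ultimately show ?thesis using that by blast
qed

text \<open>Hence, along a word sorted by decreasing diagonals, the diagonal drops by one exactly at
  the descents.\<close>

lemma diag_step_at_descent:
  assumes sorted: "sorted_wrt (diag_before D) \<tau>" and p: "Suc p < length \<tau>"
    and adm: "admissible D L" and set_L: "set L = set \<tau>" and hd_last: "D (hd L) \<le> D (last L)"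
  shows "D (\<tau> ! p) = D (\<tau> ! Suc p) + (if \<tau> ! Suc p < \<tau> ! p then 1 else 0)"
proof -
  let ?a = "\<tau> ! p" and ?b = "\<tau> ! Suc p"
  have before: "diag_before D (\<tau> ! i) (\<tau> ! j)" if "i < j" "j < length \<tau>" for i j
    using sorted_wrt_nth_less[OF sorted that] .
  show ?thesis
  proof (cases "D ?a = D ?b")
    case True
    then show ?thesis using before[of p "Suc p"] p by (auto simp: diag_before_def)
  next
    case False
    then have lt: "D ?b < D ?a" using before[of p "Suc p"] p by (auto simp: diag_before_def)
    have high: "D ?a \<le> D (\<tau> ! r) \<and> (D (\<tau> ! r) = D ?a \<longrightarrow> \<tau> ! r \<le> ?a)" if "r \<le> p" for r
      using before[of r p] that p by (cases "r = p") (auto simp: diag_before_def)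
    have low: "D (\<tau> ! r) \<le> D ?b \<and> (D (\<tau> ! r) = D ?b \<longrightarrow> ?b \<le> \<tau> ! r)" if "Suc p \<le> r" "r < length \<tau>" for r
      using before[of "Suc p" r] that by (cases "r = Suc p") (auto simp: diag_before_def)
    have sides: "(D c \<le> D ?b \<and> (D c = D ?b \<longrightarrow> ?b \<le> c)) \<or> (D ?a \<le> D c \<and> (D c = D ?a \<longrightarrow> c \<le> ?a))"
      if c: "c \<in> set L" for c
    proof -
      obtain r where r: "r < length \<tau>" "c = \<tau> ! r" using c set_L by (auto simp: in_set_conv_nth)
      show ?thesis
      proof (cases "r \<le> p")
        case True
        then show ?thesis using high[OF True] r(2) by simp
      next
        case False
        then show ?thesis using low[of r] r by simp
      qed
    qed
    have ne: "L \<noteq> []" and a: "?a \<in> set L" and b: "?b \<in> set L" using set_L p by auto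
    have gap: "D c \<le> D ?b \<or> D ?a \<le> D c" if "c \<in> set L" for c using sides[OF that] by blast
    obtain x y where xy: "x \<in> set L" "y \<in> set L" "D x = D ?b" "D y = D ?a" and step: "D ?a = D ?b + 1"
      and "x < y"
      by (rule admissible_crossing[OF adm ne hd_last gap lt b order.refl a order.refl])
    have "?b \<le> x" using sides[OF xy(1)] xy(3) lt by auto
    moreover have "y \<le> ?a" using sides[OF xy(2)] xy(4) lt by auto
    ultimately have "?b < ?a" using \<open>x < y\<close> by simp
    then show ?thesis using step by simp
  qed
qed

lemma admissible_shift:
  assumes "\<And>c. c \<in> set L \<Longrightarrow> D c = lv c - g"
  shows "admissible D L \<longleftrightarrow> admissible lv L"
  unfolding admissible_def using assms by (intro successively_cong) (auto simp: admissible_step_def)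

context perm_word
begin

lemma diag_eq_level_shift:
  assumes "f \<in> Pref n" "diagword n f = \<tau>" "c \<in> {1..n}"
  shows "diag n f c = level c + diag n f (\<tau> ! (n - 1))"
proof -
  let ?D = "diag n f" and ?L = "reading_order n f"
  have drop: "?D (\<tau> ! p) = ?D (\<tau> ! Suc p) + (if \<tau> ! Suc p < \<tau> ! p then 1 else 0)" if "Suc p < n" for p
  proof (rule diag_step_at_descent)
    show "sorted_wrt (diag_before ?D) \<tau>" using sorted_diagword assms(2) by metis
    show "Suc p < length \<tau>" using that length_\<tau> by simp
    show "admissible ?D ?L" by (rule admissible_reading_order)
    show "set ?L = set \<tau>" using set_\<tau> set_reading_order by simp
    show "?D (hd ?L) \<le> ?D (last ?L)" using reading_order_bounds(1,2)[OF assms(1) n_pos] by linarith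
  qed
  have shift: "?D (\<tau> ! p) = ?D (\<tau> ! (n - 1)) + level (\<tau> ! p)" if "p \<le> n - 1" for p
    using that
  proof (induction p rule: inc_induct)
    case base
    show ?case using level_last by simp
  next
    case (step p)
    then have "Suc p < n" by simp
    then show ?case using step.IH drop[of p] level_step[of p] by (simp add: descent_def)
  qed
  obtain p where "p < n" "c = \<tau> ! p" using car_eq_nth[OF assms(3)] by blast
  then show ?thesis using shift[of p] by simp
qed

lemma pref_eq_pref_of_shape:
  assumes fP: "f \<in> Pref n" and dw: "diagword n f = \<tau>"
  obtains g where "reading_order n f \<in> shapes level {1..n}" "straddles level g (reading_order n f)"
    "f = pref_of_shape n level g (reading_order n f)"
proof -
  let ?D = "diag n f" and ?L = "reading_order n f"
  define g where "g = - ?D (\<tau> ! (n - 1))"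
  have D: "?D c = level c - g" if "c \<in> {1..n}" for c
    using diag_eq_level_shift[OF fP dw that] by (simp add: g_def)
  have "admissible level ?L"
    using admissible_reading_order admissible_shift[where L = ?L and D = ?D and lv = level and g = g] D set_reading_order by blast
  then have shape: "?L \<in> shapes level {1..n}"
    by (simp add: shapes_def distinct_reading_order set_reading_order)
  have ne: "?L \<noteq> []" using length_reading_order[of n f] n_pos by auto
  then have "hd ?L \<in> {1..n}" "last ?L \<in> {1..n}" using set_reading_order by (metis hd_in_set last_in_set)+
  then have "straddles level g ?L"
    using reading_order_bounds[OF fP n_pos] D by (simp add: straddles_def)
  moreover have "f = pref_of_shape n level g ?L"
  proof
    fix c show "f c = pref_of_shape n level g ?L c"
    proof (cases "c \<in> {1..n}")
      case True
      then show ?thesis using diag_eq_pos_reading_order[OF True] D[OF True] fP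
        by (auto simp: pref_of_shape_def Pref_def)
    qed (use fP in \<open>auto simp: pref_of_shape_def Pref_def PiE_def extensional_def\<close>)
  qed
  ultimately show ?thesis using that shape by blast
qed

end


section \<open>Summing over preference functions with a given diagonal word\<close>

context perm_word
begin

lemma max_run_le: "int max_run \<le> int n - 1"
proof -
  have "run (n - 1) \<le> (\<Sum>i<n - 1. 1)"
    unfolding run_eq_sum by (rule sum_mono) (simp add: descent_def)
  then show ?thesis using n_pos unfolding max_run_def by simp
qed

lemma level_0_exists: "\<exists>c\<in>{1..n}. level c = 0"
  using level_last n_pos length_\<tau> set_\<tau> nth_mem
  by (metis diff_less less_numeral_extra(1) order_less_le_trans)

lemma leveled_levels: "leveled level {1..n} (int max_run)"
  by unfold_locales (use level_range level_surj in auto)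

definition shape_pairs :: "(int \<times> nat list) set" where
  "shape_pairs = Sigma {0..int max_run} (\<lambda>g. {L\<in>shapes level {1..n}. straddles level g L})"

definition pref_of_pair :: "int \<times> nat list \<Rightarrow> (nat \<Rightarrow> nat)" where
  "pref_of_pair p = pref_of_shape n level (fst p) (snd p)"

lemma shape_pref_pair: "p \<in> shape_pairs \<Longrightarrow> shape_pref n level (fst p) (snd p)"
  unfolding shape_pairs_def by (cases p) (use n_pos in \<open>auto simp: shape_pref_def\<close>)

lemma pref_of_pair_mem:
  assumes p: "p \<in> shape_pairs"
  shows "pref_of_pair p \<in> Pref n" "diagword n (pref_of_pair p) = \<tau>" "deviation n (pref_of_pair p) = fst p"
proof -
  interpret S: shape_pref n level "fst p" "snd p" by (rule shape_pref_pair[OF p])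
  show "pref_of_pair p \<in> Pref n" unfolding pref_of_pair_def by (rule S.pref_of_shape_in_Pref)
  show "deviation n (pref_of_pair p) = fst p"
    unfolding pref_of_pair_def by (rule S.deviation_pref) (use level_range level_0_exists in auto)
  have g: "0 \<le> fst p" "fst p \<le> int max_run" using p by (auto simp: shape_pairs_def)
  show "diagword n (pref_of_pair p) = \<tau>"
    unfolding pref_of_pair_def
  proof (rule diagword_eqI)
    show "sorted_wrt (diag_before (diag n S.f)) \<tau>"
      using sorted_diag_before_level
      by (rule sorted_wrt_mono_rel[rotated]) (use S.diag_pref set_\<tau> in \<open>auto simp: diag_before_def\<close>)
    show "- int n \<le> diag n S.f c \<and> diag n S.f c \<le> int n" if "c \<in> {1..n}" for c
      using S.diag_pref[OF that] level_range[OF that] g max_run_le by auto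
  qed (rule set_\<tau>)
qed

lemma pref_of_pair_weight:
  assumes p: "p \<in> shape_pairs"
  shows "t ^ area n (pref_of_pair p) * q ^ dinv n (pref_of_pair p)
    = t ^ maj \<tau> * q ^ (dinv_pairs level (snd p) + card {c\<in>{1..n}. level c < fst p})"
proof -
  interpret S: shape_pref n level "fst p" "snd p" by (rule shape_pref_pair[OF p])
  have "area n (pref_of_pair p) = maj \<tau>"
    unfolding pref_of_pair_def using S.area_pref[OF _ level_0_exists] level_range sum_level_eq_maj by simp
  then show ?thesis unfolding pref_of_pair_def S.dinv_pref by simp
qed

lemma inj_on_pref_of_pair: "inj_on pref_of_pair shape_pairs"
proof (rule inj_onI)
  fix p p' assume p: "p \<in> shape_pairs" and p': "p' \<in> shape_pairs" and e: "pref_of_pair p = pref_of_pair p'"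
  interpret S: shape_pref n level "fst p" "snd p" by (rule shape_pref_pair[OF p])
  interpret S': shape_pref n level "fst p'" "snd p'" by (rule shape_pref_pair[OF p'])
  have "\<And>c. c \<in> {1..n} \<Longrightarrow> pos (snd p) c = pos (snd p') c"
    using S.row_pref S'.row_pref e by (metis pref_of_pair_def)
  then have "snd p = snd p'" using list_eq_by_pos[OF S.distinct_L S'.distinct_L S.set_L S'.set_L] by blast
  moreover have "fst p = fst p'" using pref_of_pair_mem(3)[OF p] pref_of_pair_mem(3)[OF p'] e by simp
  ultimately show "p = p'" by (simp add: prod_eq_iff)
qed

lemma pref_of_pair_image: "pref_of_pair ` shape_pairs = {f\<in>Pref n. diagword n f = \<tau>}"
proof (rule set_eqI, rule iffI)
  fix f assume "f \<in> pref_of_pair ` shape_pairs"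
  then show "f \<in> {f\<in>Pref n. diagword n f = \<tau>}" using pref_of_pair_mem by auto
next
  fix f assume "f \<in> {f\<in>Pref n. diagword n f = \<tau>}"
  then obtain g where shape: "reading_order n f \<in> shapes level {1..n}"
    and g: "straddles level g (reading_order n f)" and f: "f = pref_of_shape n level g (reading_order n f)"
    using pref_eq_pref_of_shape by blast
  have "reading_order n f \<noteq> []" using length_reading_order[of n f] n_pos by auto
  then have "hd (reading_order n f) \<in> {1..n}" "last (reading_order n f) \<in> {1..n}"
    using set_reading_order by (metis hd_in_set last_in_set)+
  then have "0 \<le> g" "g \<le> int max_run" using level_range g by (fastforce simp: straddles_def)+
  then have "(g, reading_order n f) \<in> shape_pairs" using shape g by (simp add: shape_pairs_def)
  then show "f \<in> pref_of_pair ` shape_pairs" using f by (force simp: pref_of_pair_def)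
qed

lemma sum_pref_by_deviation:
  fixes t q :: "'a::comm_ring_1"
  shows "(\<Sum>f\<in>{f\<in>Pref n. diagword n f = \<tau> \<and> deviation n f \<in> G}. t ^ area n f * q ^ dinv n f)
       = t ^ maj \<tau> * (\<Sum>g\<in>G \<inter> {0..int max_run}. q ^ card {c\<in>{1..n}. level c < g} * shape_gf level g {1..n} q)"
proof -
  let ?P = "{p\<in>shape_pairs. fst p \<in> G}"
  have "pref_of_pair ` ?P = {f\<in>Pref n. diagword n f = \<tau> \<and> deviation n f \<in> G}"
  proof (rule set_eqI, rule iffI)
    fix f assume "f \<in> pref_of_pair ` ?P"
    then show "f \<in> {f\<in>Pref n. diagword n f = \<tau> \<and> deviation n f \<in> G}" using pref_of_pair_mem by auto
  next
    fix f assume f: "f \<in> {f\<in>Pref n. diagword n f = \<tau> \<and> deviation n f \<in> G}"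
    then have "f \<in> pref_of_pair ` shape_pairs" using pref_of_pair_image by auto
    then obtain p where "p \<in> shape_pairs" "f = pref_of_pair p" by auto
    then show "f \<in> pref_of_pair ` ?P" using f pref_of_pair_mem(3) by auto
  qed
  then have bij: "bij_betw pref_of_pair ?P {f\<in>Pref n. diagword n f = \<tau> \<and> deviation n f \<in> G}"
    using inj_on_subset[OF inj_on_pref_of_pair] by (auto simp: bij_betw_def)
  have P: "?P = Sigma (G \<inter> {0..int max_run}) (\<lambda>g. {L\<in>shapes level {1..n}. straddles level g L})"
    by (auto simp: shape_pairs_def)
  have "(\<Sum>f\<in>{f\<in>Pref n. diagword n f = \<tau> \<and> deviation n f \<in> G}. t ^ area n f * q ^ dinv n f)
      = (\<Sum>p\<in>?P. t ^ maj \<tau> * q ^ (dinv_pairs level (snd p) + card {c\<in>{1..n}. level c < fst p}))"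
    by (simp add: sum.reindex_bij_betw[OF bij, symmetric] pref_of_pair_weight)
  also have "\<dots> = (\<Sum>(g, L)\<in>Sigma (G \<inter> {0..int max_run}) (\<lambda>g. {L\<in>shapes level {1..n}. straddles level g L}).
      t ^ maj \<tau> * q ^ (dinv_pairs level L + card {c\<in>{1..n}. level c < g}))"
    unfolding P by (rule sum.cong) auto
  also have "\<dots> = (\<Sum>g\<in>G \<inter> {0..int max_run}. \<Sum>L\<in>{L\<in>shapes level {1..n}. straddles level g L}.
      t ^ maj \<tau> * q ^ (dinv_pairs level L + card {c\<in>{1..n}. level c < g}))"
    by (rule sum.Sigma[symmetric]) (auto intro: finite_subset[OF _ finite_shapes[of "{1..n}" level]])
  also have "\<dots> = t ^ maj \<tau> * (\<Sum>g\<in>G \<inter> {0..int max_run}. q ^ card {c\<in>{1..n}. level c < g} * shape_gf level g {1..n} q)"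
    by (simp add: shape_gf_def sum_distrib_left power_add mult_ac)
  finally show ?thesis .
qed

lemma Pref_sum:
  fixes t q :: "'a::comm_ring_1"
  shows "(\<Sum>f\<in>{f\<in>Pref n. diagword n f = \<tau>}. t ^ area n f * q ^ dinv n f)
       = t ^ maj \<tau> * (qint n q * level_weight level {1..n} 0 q)"
proof -
  interpret LV: leveled level "{1..n}" "int max_run" by (rule leveled_levels)
  show ?thesis
    using sum_pref_by_deviation[where G = UNIV and t = t and q = q]
      LV.sum_shape_gf_levels[of q, unfolded LV.below_def] by simp
qed

lemma PF_sum:
  fixes t q :: "'a::comm_ring_1"
  shows "(\<Sum>f\<in>{f\<in>PF n. diagword n f = \<tau>}. t ^ area n f * q ^ dinv n f)
       = t ^ maj \<tau> * (qint (last_run_len \<tau>) q * level_weight level {1..n} 0 q)"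
proof -
  interpret LV: leveled level "{1..n}" "int max_run" by (rule leveled_levels)
  have "{f\<in>PF n. diagword n f = \<tau>} = {f\<in>Pref n. diagword n f = \<tau> \<and> deviation n f \<in> {0}}"
    by (auto simp: PF_def)
  moreover have "{0} \<inter> {0..int max_run} = {0}" by auto
  ultimately have "(\<Sum>f\<in>{f\<in>PF n. diagword n f = \<tau>}. t ^ area n f * q ^ dinv n f)
      = t ^ maj \<tau> * (q ^ card {c\<in>{1..n}. level c < 0} * shape_gf level 0 {1..n} q)"
    using sum_pref_by_deviation[where G = "{0}" and t = t and q = q] by simp
  also have "{c\<in>{1..n}. level c < 0} = {}" using level_range by force
  also have "shape_gf level 0 {1..n} q = qint (card {x\<in>{1..n}. level x = 0}) q * level_weight level {1..n} 0 q"
    by (rule LV.shape_gf_eq_level_weight) auto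
  finally show ?thesis using last_run_len_eq_card_level_0 by simp
qed

lemma schedule_prod_level_weight:
  "(\<Prod>i=1..n. qint (schedule \<tau> i) q) = qint (last_run_len \<tau>) q * level_weight level {1..n} 0 q"
proof -
  have no_neg: "{c\<in>{1..n}. level c < 0} = {}" using level_range by force
  have "(\<Prod>i=1..n. qint (schedule \<tau> i) q)
      = qfact (last_run_len \<tau>) q * (\<Prod>c\<in>{x\<in>{1..n}. 0 < level x}. qint (top_weight level {1..n} c) q)"
    by (rule prod_schedule)
  moreover have "qfact (last_run_len \<tau>) q = qint (last_run_len \<tau>) q * qfact (last_run_len \<tau> - 1) q"
    by (rule qfact_eq_qint_mult[OF last_run_pos])
  moreover have "level_weight level {1..n} 0 q
      = qfact (last_run_len \<tau> - 1) q * (\<Prod>c\<in>{x\<in>{1..n}. 0 < level x}. qint (top_weight level {1..n} c) q)"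
    unfolding level_weight_def no_neg last_run_len_eq_card_level_0 by simp
  ultimately show ?thesis by (simp add: mult.assoc)
qed

end

theorem corollary3p3:
  fixes n :: nat and \<tau> :: "nat list" and t q :: "'a::field"
  assumes "n \<ge> 1" and "length \<tau> = n" and "distinct \<tau>" and "set \<tau> = {1..n}"
    and "qint (last_run_len \<tau>) q \<noteq> 0"
  shows "(\<Sum>f\<in>{f \<in> Pref n. diagword n f = \<tau>}. t ^ area n f * q ^ dinv n f)
           = t ^ maj \<tau> * (qint n q / qint (last_run_len \<tau>) q) * (\<Prod>i=1..n. qint (schedule \<tau> i) q)
       \<and> t ^ maj \<tau> * (qint n q / qint (last_run_len \<tau>) q) * (\<Prod>i=1..n. qint (schedule \<tau> i) q)
           = (qint n q / qint (last_run_len \<tau>) q) *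
             (\<Sum>f\<in>{f \<in> PF n. diagword n f = \<tau>}. t ^ area n f * q ^ dinv n f)"
proof -
  interpret perm_word n \<tau> using assms by unfold_locales auto
  show ?thesis
    unfolding Pref_sum PF_sum schedule_prod_level_weight using assms(5) by (simp add: field_simps)
qed

end
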